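(* For every semi-simple probabilistic Rabin word automaton $\mathcal{W}$ one can effectively construct a simple probabilistic Rabin word automaton $\mathcal{W}'$ such that $\mathcal{L}^{=1}(\mathcal{W})=\varnothing$ iff $\mathcal{L}^{=1}(\mathcal{W}')=\varnothing$, and $\mathcal{L}^{>0}(\mathcal{W})=\varnothing$ iff $\mathcal{L}^{>0}(\mathcal{W}')=\varnothing$.
   Context: A probabilistic word automaton is a tuple $\mathcal{W}=(Q,\Sigma,\delta,q_\iota,\mathrm{Acc})$ with $Q$ finite, $\Sigma$ a finite alphabet, $\delta:Q\times\Sigma\times Q\to[0,1]$ with $\sum_{p}\delta(q,a,p)=1$ for all $q,a$, initial state $q_\iota$, and acceptance condition $\mathrm{Acc}\subseteq Q^\omega$. A run on $w\in\Sigma^\omega$ is $r\in Q^\omega$ with $r_0=q_\iota$ and $\delta(r_i,w_i,r_{i+1})>0$ for all $i$; $\mu_w$ is the induced probability measure on runs (cone of prefix $r_0\dots r_n$ has measure $\prod_{i<n}\delta(r_i,w_i,r_{i+1})$), and $\mathcal{W}(w)=\mu_w(\text{accepting runs})$. $\mathcal{L}^{>0}(\mathcal{W})=\{w:\mathcal{W}(w)>0\}$ and $\mathcal{L}^{=1}(\mathcal{W})=\{w:\mathcal{W}(w)=1\}$. Rabin condition with pairs $\langle\alpha_1,\beta_1\rangle,\dots,\langle\alpha_k,\beta_k\rangle$: a run $r$ is accepting iff for some $i$, some state of $\alpha_i$ occurs infinitely often in $r$ and no state of $\beta_i$ occurs infinitely often in $r$. Simple: all transition probabilities lie in $\{0,\tfrac12,1\}$.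 Semi-simple: all transition probabilities are of the form $p/2^q$ with $p,q\in\mathbb{N}$. (The alphabet of $\mathcal{W}'$ may differ from that of $\mathcal{W}$.) *)

theory Defs
  imports "HOL-Probability.Probability" "HOL-Library.Nat_Bijection"
begin

record ('q, 'a) pra =
  states   :: "'q set"
  alphabet :: "'a set"
  trans    :: "'q \<Rightarrow> 'a \<Rightarrow> 'q \<Rightarrow> real"
  initial  :: "'q"
  pairs    :: "('q set \<times> 'q set) list"

definition wf_pra :: "('q, 'a) pra \<Rightarrow> bool" where
  "wf_pra A \<longleftrightarrow> finite (states A) \<and> finite (alphabet A) \<and> initial A \<in> states A \<and>
     (\<forall>q\<in>states A. \<forall>a\<in>alphabet A.
        (\<forall>p. trans A q a p \<ge> 0 \<and> (p \<notin> states A \<longrightarrow> trans A q a p = 0)) \<and>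
        (\<Sum>p\<in>states A. trans A q a p) = 1)"

definition simple_pra :: "('q, 'a) pra \<Rightarrow> bool" where
  "simple_pra A \<longleftrightarrow> (\<forall>q\<in>states A. \<forall>a\<in>alphabet A. \<forall>p\<in>states A.
      trans A q a p \<in> {0, 1/2, 1})"

definition semi_simple_pra :: "('q, 'a) pra \<Rightarrow> bool" where
  "semi_simple_pra A \<longleftrightarrow> (\<forall>q\<in>states A. \<forall>a\<in>alphabet A. \<forall>p\<in>states A.
      \<exists>u e :: nat. trans A q a p = real u / 2 ^ e)"

definition run_space :: "('q, 'a) pra \<Rightarrow> (nat \<Rightarrow> 'q) measure" where
  "run_space A = PiM UNIV (\<lambda>_::nat. count_space (states A))"

definition cylinder :: "('q, 'a) pra \<Rightarrow> (nat \<Rightarrow> 'q) \<Rightarrow> nat \<Rightarrow> (nat \<Rightarrow> 'q) set" where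
  "cylinder A x n = {r \<in> space (run_space A). \<forall>i\<le>n. r i = x i}"

definition cyl_prob :: "('q, 'a) pra \<Rightarrow> (nat \<Rightarrow> 'a) \<Rightarrow> (nat \<Rightarrow> 'q) \<Rightarrow> nat \<Rightarrow> real" where
  "cyl_prob A w x n =
     (if x 0 = initial A then (\<Prod>i<n. trans A (x i) (w i) (x (Suc i))) else 0)"

definition run_measure :: "('q, 'a) pra \<Rightarrow> (nat \<Rightarrow> 'a) \<Rightarrow> (nat \<Rightarrow> 'q) measure" where
  "run_measure A w = (THE M. prob_space M \<and> sets M = sets (run_space A) \<and>
      (\<forall>n x. (\<forall>i\<le>n. x i \<in> states A) \<longrightarrow> measure M (cylinder A x n) = cyl_prob A w x n))"

definition rabin_accepting :: "('q, 'a) pra \<Rightarrow> (nat \<Rightarrow> 'q) \<Rightarrow> bool" where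
  "rabin_accepting A r \<longleftrightarrow> (\<exists>(\<alpha>, \<beta>)\<in>set (pairs A).
      (\<exists>q\<in>\<alpha>. \<exists>\<^sub>\<infinity>i. r i = q) \<and> (\<forall>q\<in>\<beta>. \<not> (\<exists>\<^sub>\<infinity>i. r i = q)))"

definition acc_prob :: "('q, 'a) pra \<Rightarrow> (nat \<Rightarrow> 'a) \<Rightarrow> real" where
  "acc_prob A w = measure (run_measure A w) {r \<in> space (run_space A). rabin_accepting A r}"

definition words :: "('q, 'a) pra \<Rightarrow> (nat \<Rightarrow> 'a) set" where
  "words A = {w. \<forall>i. w i \<in> alphabet A}"

definition lang_pos :: "('q, 'a) pra \<Rightarrow> (nat \<Rightarrow> 'a) set" where
  "lang_pos A = {w \<in> words A. acc_prob A w > 0}"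

definition lang_one :: "('q, 'a) pra \<Rightarrow> (nat \<Rightarrow> 'a) set" where
  "lang_one A = {w \<in> words A. acc_prob A w = 1}"

text \<open>Code: number of states n (states 0..<n), number of letters m (letters 0..<m),
  initial state, transition entries (q, a, p, u, e) each contributing u / 2^e to
  delta(q,a,p), and Rabin pairs given as lists of states.\<close>
datatype pra_code = PraCode (c_nstates: nat) (c_nletters: nat) (c_init: nat)
  (c_trans: "(nat \<times> nat \<times> nat \<times> nat \<times> nat) list") (c_rabin: "(nat list \<times> nat list) list")

definition aut_of :: "pra_code \<Rightarrow> (nat, nat) pra" where
  "aut_of D = \<lparr> states = {..<c_nstates D}, alphabet = {..<c_nletters D},
     trans = (\<lambda>q a p. \<Sum>(q', a', p', u, e) \<leftarrow> c_trans D.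
                if (q', a', p') = (q, a, p) then real u / 2 ^ e else 0),
     initial = c_init D,
     pairs = map (\<lambda>(al, be). (set al, set be)) (c_rabin D) \<rparr>"

definition encode_code :: "pra_code \<Rightarrow> nat" where
  "encode_code D = list_encode
     [c_nstates D, c_nletters D, c_init D,
      list_encode (map (\<lambda>(q, a, p, u, e). list_encode [q, a, p, u, e]) (c_trans D)),
      list_encode (map (\<lambda>(al, be). prod_encode (list_encode al, list_encode be)) (c_rabin D))]"

section \<open>Partial recursive functions (model of effective computation)\<close>

datatype recf = Zer | Succ | Proj nat | Comp recf "recf list" | PrimRec recf recf | Mu recf

inductive rec_eval :: "recf \<Rightarrow> nat list \<Rightarrow> nat \<Rightarrow> bool" where
  zer:  "rec_eval Zer xs 0"
| succ: "rec_eval Succ (x # xs) (Suc x)"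
| proj: "i < length xs \<Longrightarrow> rec_eval (Proj i) xs (xs ! i)"
| comp: "length ys = length gs \<Longrightarrow> (\<forall>i<length gs. rec_eval (gs ! i) xs (ys ! i)) \<Longrightarrow>
         rec_eval f ys z \<Longrightarrow> rec_eval (Comp f gs) xs z"
| prim0: "rec_eval f xs y \<Longrightarrow> rec_eval (PrimRec f g) (0 # xs) y"
| primS: "rec_eval (PrimRec f g) (n # xs) y \<Longrightarrow> rec_eval g (n # y # xs) z \<Longrightarrow>
          rec_eval (PrimRec f g) (Suc n # xs) z"
| mu:   "rec_eval f (n # xs) 0 \<Longrightarrow> (\<forall>m<n. \<exists>k. rec_eval f (m # xs) (Suc k)) \<Longrightarrow>
         rec_eval (Mu f) xs n"

end

theory Submission
  imports Defs
begin

text \<open>A transition probability \<open>u / 2 ^ e\<close> can be realised by \<open>K \<ge> e\<close> fair coins: read the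
  coins as a number below \<open>2 ^ K\<close> and give the transition an interval of \<open>u * 2 ^ (K - e)\<close> of
  these numbers. The simple automaton reads every letter of the semi-simple one followed by
  \<open>K - 1\<close> copies of a fresh padding letter, tossing one coin per letter to descend a binary
  decision tree and jumping to the selected successor at the leaves. Cutting its coin sequence
  into blocks of \<open>K\<close> coins, the run on a padded word is in an original state exactly at block
  boundaries and there follows the original run driven by the blocks, which are i.i.d. uniform;
  since the Rabin pairs only mention original states, acceptance probabilities agree. Words that
  are not correctly padded lead to a rejecting sink and are accepted with probability \<open>0\<close>. The construction is
  computable: it is written in a small expression language with bounded loops, which compiles to
  primitive recursive functions.\<close>

section \<open>Run measures of sampled runs\<close>

lemma space_run_space: "space (run_space A) = (UNIV \<rightarrow>\<^sub>E states A)"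
  by (simp add: run_space_def space_PiM)

lemma cylinder_in_sets: "cylinder A x n \<in> sets (run_space A)"
proof -
  have "cylinder A x n = {r \<in> space (run_space A). \<forall>i\<in>{..n}. r i = x i}"
    by (auto simp: cylinder_def)
  also have "\<dots> \<in> sets (run_space A)"
    unfolding run_space_def by measurable
  finally show ?thesis .
qed

lemma accepting_runs_in_sets:
  fixes A :: "('q :: countable, 'a) pra"
  shows "{r \<in> space (run_space A). rabin_accepting A r} \<in> sets (run_space A)"
proof -
  have "rabin_accepting A r \<longleftrightarrow> (\<exists>p\<in>set (pairs A).
      (\<exists>q. q \<in> fst p \<and> (\<forall>N. \<exists>i. N \<le> i \<and> r i = q)) \<and>
      (\<forall>q. q \<in> snd p \<longrightarrow> \<not> (\<forall>N. \<exists>i. N \<le> i \<and> r i = q)))" for r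
    unfolding rabin_accepting_def INFM_nat_le by (simp add: split_def Bex_def Ball_def)
  then have "{r \<in> space (run_space A). rabin_accepting A r} =
    {r \<in> space (run_space A). \<exists>p\<in>set (pairs A).
      (\<exists>q. q \<in> fst p \<and> (\<forall>N. \<exists>i. N \<le> i \<and> r i = q)) \<and>
      (\<forall>q. q \<in> snd p \<longrightarrow> \<not> (\<forall>N. \<exists>i. N \<le> i \<and> r i = q))}"
    by blast
  also have "\<dots> \<in> sets (run_space A)"
    unfolding run_space_def by measurable
  finally show ?thesis .
qed

lemma rabin_accepting_cong:
  assumes pairs: "pairs A' = pairs A"
    and inf: "\<And>\<alpha> \<beta> q. (\<alpha>, \<beta>) \<in> set (pairs A) \<Longrightarrow> q \<in> \<alpha> \<union> \<beta> \<Longrightarrow>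
      (\<exists>\<^sub>\<infinity>t. r' t = q) \<longleftrightarrow> (\<exists>\<^sub>\<infinity>i. r i = q)"
  shows "rabin_accepting A' r' \<longleftrightarrow> rabin_accepting A r"
  unfolding rabin_accepting_def pairs
proof (intro bex_cong refl, clarify)
  fix \<alpha> \<beta> assume "(\<alpha>, \<beta>) \<in> set (pairs A)"
  from inf[OF this] show "(\<exists>q\<in>\<alpha>. \<exists>\<^sub>\<infinity>t. r' t = q) \<and> (\<forall>q\<in>\<beta>. \<not> (\<exists>\<^sub>\<infinity>t. r' t = q)) \<longleftrightarrow>
      (\<exists>q\<in>\<alpha>. \<exists>\<^sub>\<infinity>i. r i = q) \<and> (\<forall>q\<in>\<beta>. \<not> (\<exists>\<^sub>\<infinity>i. r i = q))"
    by blast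
qed

lemma not_rabin_accepting_eventually_const:
  assumes const: "\<forall>t\<ge>T. r t = s" and s: "\<And>\<alpha> \<beta>. (\<alpha>, \<beta>) \<in> set (pairs A) \<Longrightarrow> s \<notin> \<alpha>"
  shows "\<not> rabin_accepting A r"
proof
  assume "rabin_accepting A r"
  then obtain \<alpha> \<beta> q where "(\<alpha>, \<beta>) \<in> set (pairs A)" "q \<in> \<alpha>" and inf: "\<exists>\<^sub>\<infinity>i. r i = q"
    unfolding rabin_accepting_def by auto
  then have "q \<noteq> s" using s by blast
  then have "{i. r i = q} \<subseteq> {..<T}" using const by (auto simp: not_le[symmetric])
  then have "finite {i. r i = q}" by (rule finite_subset) simp
  then show False using inf by (simp add: frequently_cofinite)
qed

lemma cylinders_disjoint:
  "disjoint_family_on (\<lambda>x. cylinder A x N) (Pi\<^sub>E {..N} F)"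
proof (unfold disjoint_family_on_def, intro ballI impI)
  fix x x' assume x: "x \<in> Pi\<^sub>E {..N} F" "x' \<in> Pi\<^sub>E {..N} F" "x \<noteq> x'"
  then obtain i where "i \<le> N" "x i \<noteq> x' i"
    by (metis PiE_ext atMost_iff)
  then show "cylinder A x N \<inter> cylinder A x' N = {}"
    by (auto simp: cylinder_def)
qed

lemma prod_emb_eq_UN_cylinder:
  assumes J: "finite J" "J \<noteq> {}" and F: "\<And>j. j \<in> J \<Longrightarrow> F j \<subseteq> states A"
  defines "X \<equiv> Pi\<^sub>E {..Max J} (\<lambda>i. if i \<in> J then F i else states A)"
  shows "prod_emb UNIV (\<lambda>_. count_space (states A)) J (Pi\<^sub>E J F) = (\<Union>x\<in>X. cylinder A x (Max J))"
proof (intro set_eqI iffI)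
  fix r assume "r \<in> prod_emb UNIV (\<lambda>_. count_space (states A)) J (Pi\<^sub>E J F)"
  then have r: "r \<in> space (run_space A)" "\<forall>j\<in>J. r j \<in> F j"
    by (auto simp: prod_emb_iff space_run_space)
  then have "restrict r {..Max J} \<in> X"
    by (auto simp: X_def space_run_space PiE_iff)
  moreover have "r \<in> cylinder A (restrict r {..Max J}) (Max J)"
    using r by (simp add: cylinder_def)
  ultimately show "r \<in> (\<Union>x\<in>X. cylinder A x (Max J))" by blast
next
  fix r assume "r \<in> (\<Union>x\<in>X. cylinder A x (Max J))"
  then obtain x where x: "x \<in> X" "r \<in> cylinder A x (Max J)" by blast
  have "r j \<in> F j" if j: "j \<in> J" for j
  proof -
    have "j \<le> Max J" using J j by simp
    then have "x j \<in> F j" using x(1) j unfolding X_def PiE_iff by (metis atMost_iff)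
    then show ?thesis using x(2) \<open>j \<le> Max J\<close> by (simp add: cylinder_def)
  qed
  then show "r \<in> prod_emb UNIV (\<lambda>_. count_space (states A)) J (Pi\<^sub>E J F)"
    using x(2) by (auto simp: prod_emb_iff cylinder_def space_run_space)
qed

lemma run_measure_unique:
  assumes wf: "wf_pra A"
    and M1: "prob_space M1" "sets M1 = sets (run_space A)"
    and M2: "prob_space M2" "sets M2 = sets (run_space A)"
    and eq: "\<And>n x. (\<forall>i\<le>n. x i \<in> states A) \<Longrightarrow>
      measure M1 (cylinder A x n) = measure M2 (cylinder A x n)"
  shows "M1 = M2"
proof (rule measure_eqI_PiM_infinite[where I = UNIV and M = "\<lambda>_. count_space (states A)"])
  show "sets M1 = sets (Pi\<^sub>M UNIV (\<lambda>_. count_space (states A)))"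
    "sets M2 = sets (Pi\<^sub>M UNIV (\<lambda>_. count_space (states A)))"
    using M1 M2 by (simp_all add: run_space_def)
  show "finite_measure M1" using M1(1) by (simp add: prob_space_def)
next
  fix F and J :: "nat set"
  assume J: "finite J" and F: "\<And>i. i \<in> J \<Longrightarrow> F i \<in> sets (count_space (states A))"
  interpret M1: prob_space M1 by (rule M1)
  interpret M2: prob_space M2 by (rule M2)
  let ?E = "prod_emb UNIV (\<lambda>_. count_space (states A)) J (Pi\<^sub>E J F)"
  show "emeasure M1 ?E = emeasure M2 ?E"
  proof (cases "J = {}")
    case True
    then have "?E = space (run_space A)" by (auto simp: prod_emb_def space_run_space)
    moreover have "space M1 = space (run_space A)" "space M2 = space (run_space A)"
      by (rule sets_eq_imp_space_eq, fact)+
    ultimately show ?thesis using M1.emeasure_space_1 M2.emeasure_space_1 by simp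
  next
    case False
    define X where "X = Pi\<^sub>E {..Max J} (\<lambda>i. if i \<in> J then F i else states A)"
    have F': "F j \<subseteq> states A" if "j \<in> J" for j using F that by auto
    have "finite (states A)" using wf by (simp add: wf_pra_def)
    then have "finite X" using F' unfolding X_def by (intro finite_PiE) (auto intro: finite_subset)
    have cyl_eq: "emeasure M1 (cylinder A x (Max J)) = emeasure M2 (cylinder A x (Max J))"
      if "x \<in> X" for x
    proof -
      have "\<forall>i\<le>Max J. x i \<in> states A" using that F' by (auto simp: X_def PiE_iff split: if_splits)
      then show ?thesis using eq by (simp add: M1.emeasure_eq_measure M2.emeasure_eq_measure)
    qed
    have E: "?E = (\<Union>x\<in>X. cylinder A x (Max J))"
      unfolding X_def using J False F' by (rule prod_emb_eq_UN_cylinder)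
    have disj: "disjoint_family_on (\<lambda>x. cylinder A x (Max J)) X"
      unfolding X_def by (rule cylinders_disjoint)
    have "(\<lambda>x. cylinder A x (Max J)) ` X \<subseteq> sets M1" "(\<lambda>x. cylinder A x (Max J)) ` X \<subseteq> sets M2"
      using M1 M2 cylinder_in_sets by auto
    then have "emeasure M1 (\<Union>x\<in>X. cylinder A x (Max J)) =
      (\<Sum>x\<in>X. emeasure M1 (cylinder A x (Max J)))"
        "emeasure M2 (\<Union>x\<in>X. cylinder A x (Max J)) = (\<Sum>x\<in>X. emeasure M2 (cylinder A x (Max J)))"
      using disj \<open>finite X\<close> by (simp_all add: sum_emeasure)
    then show ?thesis using E cyl_eq by simp
  qed
qed

definition sampled_run ::
    "('q, 'a) pra \<Rightarrow> ('q \<Rightarrow> 'a \<Rightarrow> 'c \<Rightarrow> 'q) \<Rightarrow> (nat \<Rightarrow> 'a) \<Rightarrow> (nat \<Rightarrow> 'c) \<Rightarrow> nat \<Rightarrow> 'q" where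
  "sampled_run A G w \<omega> i = rec_nat (initial A) (\<lambda>i s. G s (w i) (\<omega> i)) i"

lemma sampled_run_simps[simp]:
  "sampled_run A G w \<omega> 0 = initial A"
  "sampled_run A G w \<omega> (Suc i) = G (sampled_run A G w \<omega> i) (w i) (\<omega> i)"
  by (simp_all add: sampled_run_def)

locale run_sampler =
  fixes A :: "('q :: countable, 'a) pra" and w :: "nat \<Rightarrow> 'a"
    and M :: "'c measure" and G :: "'q \<Rightarrow> 'a \<Rightarrow> 'c \<Rightarrow> 'q"
  assumes wf: "wf_pra A" and w: "w \<in> words A" and M: "prob_space M"
    and G_states: "\<And>q a c. q \<in> states A \<Longrightarrow> a \<in> alphabet A \<Longrightarrow> c \<in> space M \<Longrightarrow> G q a c \<in> states A"
    and G_measurable: "\<And>q a. G q a \<in> measurable M (count_space UNIV)"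
    and G_trans: "\<And>q a p. q \<in> states A \<Longrightarrow> a \<in> alphabet A \<Longrightarrow> p \<in> states A \<Longrightarrow>
        trans A q a p = measure M {c \<in> space M. G q a c = p}"
begin

abbreviation "\<Omega> \<equiv> Pi\<^sub>M (UNIV :: nat set) (\<lambda>_. M)"
abbreviation "run \<equiv> sampled_run A G w"

sublocale \<Omega>: product_prob_space "\<lambda>_. M" "UNIV :: nat set"
  by (rule product_prob_spaceI) (rule M)

lemma letter_in_alphabet: "w i \<in> alphabet A"
  using w by (simp add: words_def)

lemma trans_nonneg: "q \<in> states A \<Longrightarrow> trans A q (w i) p \<ge> 0"
  using wf letter_in_alphabet by (simp add: wf_pra_def)

lemma run_in_states: "\<omega> \<in> space \<Omega> \<Longrightarrow> run \<omega> i \<in> states A"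
proof (induction i)
  case 0 then show ?case using wf by (simp add: wf_pra_def)
next
  case (Suc i)
  have "\<omega> i \<in> space M" using Suc.prems by (auto simp: space_PiM PiE_iff)
  then show ?case using Suc G_states letter_in_alphabet by simp
qed

lemma run_component_measurable: "(\<lambda>\<omega>. run \<omega> i) \<in> measurable \<Omega> (count_space (states A))"
proof (induction i)
  case 0 then show ?case using wf by (simp add: wf_pra_def)
next
  case (Suc i)
  have "(\<lambda>\<omega>. G q (w i) (\<omega> i)) \<in> measurable \<Omega> (count_space UNIV)" for q
    using G_measurable[of q "w i"] by measurable
  then have "(\<lambda>\<omega>. G (run \<omega> i) (w i) (\<omega> i)) \<in> measurable \<Omega> (count_space UNIV)"
    by (rule measurable_compose_countable'[OF _ Suc])
      (use wf in \<open>simp add: wf_pra_def countable_finite\<close>)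
  then have m: "(\<lambda>\<omega>. run \<omega> (Suc i)) \<in> measurable \<Omega> (count_space UNIV)" by simp
  have "countable (states A)" using wf by (simp add: wf_pra_def countable_finite)
  then show ?case
    unfolding measurable_count_space_eq2_countable
  proof (intro conjI ballI)
    show "(\<lambda>\<omega>. run \<omega> (Suc i)) \<in> space \<Omega> \<rightarrow> states A" using run_in_states by blast
    show "(\<lambda>\<omega>. run \<omega> (Suc i)) -` {s} \<inter> space \<Omega> \<in> sets \<Omega>" for s
      using measurable_sets[OF m, of "{s}"] by simp
  qed
qed

lemma run_measurable: "run \<in> measurable \<Omega> (run_space A)"
  unfolding run_space_def
  by (rule measurable_PiM_single') (auto simp: run_component_measurable run_in_states)

lemma run_vimage_eq:
  "run -` {r \<in> space (run_space A). P r} \<inter> space \<Omega> = {\<omega> \<in> space \<Omega>. P (run \<omega>)}"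
  using measurable_space[OF run_measurable] by blast

lemma cylinder_event_eq:
  assumes "x 0 = initial A"
  shows "{\<omega> \<in> space \<Omega>. \<forall>i\<le>n. run \<omega> i = x i} =
    {\<omega> \<in> space \<Omega>. \<forall>i\<in>{..<n}. \<omega> i \<in> {c \<in> space M. G (x i) (w i) c = x (Suc i)}}"
proof -
  have "(\<forall>i\<le>n. run \<omega> i = x i) \<longleftrightarrow> (\<forall>i<n. G (x i) (w i) (\<omega> i) = x (Suc i))" for \<omega>
  proof (induction n)
    case 0 then show ?case using assms by simp
  next
    case (Suc n)
    then show ?case by (auto simp: le_Suc_eq less_Suc_eq)
  qed
  then show ?thesis by (auto simp: space_PiM)
qed

lemma measure_cylinder_event:
  assumes x: "\<forall>i\<le>n. x i \<in> states A" and x0: "x 0 = initial A"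
  shows "measure \<Omega> {\<omega> \<in> space \<Omega>. \<forall>i\<le>n. run \<omega> i = x i} = (\<Prod>i<n. trans A (x i) (w i) (x (Suc i)))"
proof -
  let ?X = "\<lambda>i. {c \<in> space M. G (x i) (w i) c = x (Suc i)}"
  have X_sets: "?X i \<in> sets M" for i
    using measurable_sets[OF G_measurable, of "{x (Suc i)}"]
    by (simp add: vimage_def Int_def conj_commute)
  have "emeasure \<Omega> {\<omega> \<in> space \<Omega>. \<forall>i\<le>n. run \<omega> i = x i} = (\<Prod>i<n. emeasure M (?X i))"
    unfolding cylinder_event_eq[of x n, OF x0] by (rule \<Omega>.emeasure_PiM_Collect) (auto simp: X_sets)
  also have "\<dots> = (\<Prod>i<n. ennreal (trans A (x i) (w i) (x (Suc i))))"
  proof (rule prod.cong[OF refl])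
    fix i assume "i \<in> {..<n}"
    then have "trans A (x i) (w i) (x (Suc i)) = measure M (?X i)"
      using x by (intro G_trans letter_in_alphabet) auto
    then show "emeasure M (?X i) = ennreal (trans A (x i) (w i) (x (Suc i)))"
      by (simp add: \<Omega>.M.emeasure_eq_measure)
  qed
  also have "\<dots> = ennreal (\<Prod>i<n. trans A (x i) (w i) (x (Suc i)))"
    using x by (intro prod_ennreal trans_nonneg) auto
  finally have "ennreal (measure \<Omega> {\<omega> \<in> space \<Omega>. \<forall>i\<le>n. run \<omega> i = x i}) =
      ennreal (\<Prod>i<n. trans A (x i) (w i) (x (Suc i)))"
    by (simp add: \<Omega>.emeasure_eq_measure)
  moreover have "(\<Prod>i<n. trans A (x i) (w i) (x (Suc i))) \<ge> 0"
    using x by (intro prod_nonneg trans_nonneg) auto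
  ultimately show ?thesis by (subst (asm) ennreal_inj) simp_all
qed

lemma measure_distr_run_cylinder:
  assumes x: "\<forall>i\<le>n. x i \<in> states A"
  shows "measure (distr \<Omega> (run_space A) run) (cylinder A x n) = cyl_prob A w x n"
proof -
  have "measure (distr \<Omega> (run_space A) run) (cylinder A x n) =
      measure \<Omega> {\<omega> \<in> space \<Omega>. \<forall>i\<le>n. run \<omega> i = x i}"
    unfolding measure_distr[OF run_measurable cylinder_in_sets] unfolding cylinder_def
      run_vimage_eq ..
  moreover have "{\<omega> \<in> space \<Omega>. \<forall>i\<le>n. run \<omega> i = x i} = {}" if "x 0 \<noteq> initial A"
    using that by force
  ultimately show ?thesis
    using measure_cylinder_event[OF x] by (cases "x 0 = initial A") (simp_all add: cyl_prob_def)
qed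

theorem run_measure_eq_distr: "run_measure A w = distr \<Omega> (run_space A) run"
proof -
  let ?D = "distr \<Omega> (run_space A) run"
  let ?P = "\<lambda>M. prob_space M \<and> sets M = sets (run_space A) \<and>
      (\<forall>n x. (\<forall>i\<le>n. x i \<in> states A) \<longrightarrow> measure M (cylinder A x n) = cyl_prob A w x n)"
  have "?P ?D"
    using measure_distr_run_cylinder \<Omega>.prob_space_distr[OF run_measurable] by auto
  moreover have "M' = ?D" if "?P M'" for M'
    using run_measure_unique[OF wf, of M' ?D] that \<open>?P ?D\<close> by auto
  ultimately show ?thesis unfolding run_measure_def by (rule the_equality)
qed

lemma accepting_event_in_sets: "{\<omega> \<in> space \<Omega>. rabin_accepting A (run \<omega>)} \<in> sets \<Omega>"
  using measurable_sets[OF run_measurable accepting_runs_in_sets] by (simp only: run_vimage_eq)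

lemma acc_prob_eq_sampled: "acc_prob A w = measure \<Omega> {\<omega> \<in> space \<Omega>. rabin_accepting A (run \<omega>)}"
  unfolding acc_prob_def run_measure_eq_distr measure_distr[OF run_measurable
    accepting_runs_in_sets]
    run_vimage_eq ..

end

section \<open>Fair coins and blocks of coins\<close>

definition coin :: "bool measure" where
  "coin = measure_pmf (pmf_of_set UNIV)"

lemma prob_space_coin: "prob_space coin"
  by (simp add: coin_def prob_space_measure_pmf)

lemma space_coin[simp]: "space coin = UNIV"
  and sets_coin[simp]: "sets coin = UNIV"
  by (simp_all add: coin_def)

lemma measure_coin: "measure coin X = card X / 2"
  by (simp add: coin_def measure_pmf_of_set)

lemma card_Collect_bool:
  "card {b::bool. P b} = (if P True then 1 else 0) + (if P False then 1 else 0)"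
proof -
  have "{b::bool. P b} = (if P True then {True} else {}) \<union> (if P False then {False} else {})"
    by (auto split: if_splits) (metis (full_types))+
  then show ?thesis by (auto split: if_splits)
qed

lemma measurable_coin[measurable]: "f \<in> measurable coin (count_space UNIV)"
  by (simp add: measurable_def)

definition coin_block :: "nat \<Rightarrow> (nat \<Rightarrow> bool) measure" where
  "coin_block K = Pi\<^sub>M {..<K} (\<lambda>_. coin)"

interpretation coins: product_prob_space "\<lambda>_::nat. coin" I for I
  by (rule product_prob_spaceI) (rule prob_space_coin)

lemma prob_space_coin_block: "prob_space (coin_block K)"
  unfolding coin_block_def by (rule coins.P.prob_space_axioms)

lemma space_coin_block: "space (coin_block K) = ({..<K} \<rightarrow>\<^sub>E UNIV)"
  by (simp add: coin_block_def space_PiM)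

lemma sets_coin_block: "sets (coin_block K) = Pow ({..<K} \<rightarrow>\<^sub>E UNIV)"
proof -
  have "sets (coin_block K) = sets (Pi\<^sub>M {..<K} (\<lambda>_. count_space (UNIV :: bool set)))"
    unfolding coin_block_def by (rule sets_PiM_cong) simp_all
  also have "\<dots> = Pow ({..<K} \<rightarrow>\<^sub>E UNIV)"
    by (subst count_space_PiM_finite) simp_all
  finally show ?thesis .
qed

lemma measurable_coin_block[measurable]: "f \<in> measurable (coin_block K) (count_space UNIV)"
  by (auto simp: measurable_def sets_coin_block space_coin_block)

lemma emeasure_coin_block_PiE:
  "emeasure (coin_block K) (Pi\<^sub>E {..<K} X) = (\<Prod>k<K. emeasure coin (X k))"
  unfolding coin_block_def by (rule coins.emeasure_PiM) auto

primrec bits_val :: "nat \<Rightarrow> (nat \<Rightarrow> bool) \<Rightarrow> nat" where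
  "bits_val 0 f = 0"
| "bits_val (Suc j) f = 2 * bits_val j f + of_bool (f j)"

lemma bits_val_less: "bits_val j f < 2 ^ j"
  by (induction j) auto

lemma bits_val_cong: "(\<And>i. i < j \<Longrightarrow> f i = g i) \<Longrightarrow> bits_val j f = bits_val j g"
  by (induction j) auto

lemma inj_on_bits_val: "inj_on (bits_val K) ({..<K} \<rightarrow>\<^sub>E UNIV)"
proof (induction K)
  case 0 then show ?case by (simp add: inj_on_def)
next
  case (Suc K)
  show ?case
  proof (rule inj_onI)
    fix f g assume f: "f \<in> {..<Suc K} \<rightarrow>\<^sub>E UNIV" and g: "g \<in> {..<Suc K} \<rightarrow>\<^sub>E UNIV"
      and eq: "bits_val (Suc K) f = bits_val (Suc K) g"
    have "bits_val (Suc K) h mod 2 = of_bool (h K)" for h by simp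
    then have "of_bool (f K) = (of_bool (g K) :: nat)" using eq by metis
    then have last: "f K = g K" by (cases "f K"; cases "g K") simp_all
    with eq have "bits_val K (restrict f {..<K}) = bits_val K (restrict g {..<K})"
      by (simp add: bits_val_cong[of K "restrict f {..<K}" f]
          bits_val_cong[of K "restrict g {..<K}" g])
    then have "restrict f {..<K} = restrict g {..<K}"
      using Suc.IH by (auto dest: inj_onD)
    then show "f = g" using f g last
      by (auto simp: fun_eq_iff PiE_iff extensional_def less_Suc_eq restrict_def split: if_splits)
  qed
qed

lemma bij_betw_bits_val: "bij_betw (bits_val K) ({..<K} \<rightarrow>\<^sub>E UNIV) {..<2 ^ K}"
proof -
  have "card ({..<K} \<rightarrow>\<^sub>E (UNIV :: bool set)) = 2 ^ K" by (simp add: card_PiE)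
  moreover have "bits_val K ` ({..<K} \<rightarrow>\<^sub>E UNIV) \<subseteq> {..<2 ^ K}" using bits_val_less by auto
  ultimately show ?thesis using inj_on_bits_val
    by (metis bij_betw_def card_image card_lessThan card_subset_eq finite_lessThan)
qed

lemma measure_coin_block_bits_val:
  "measure (coin_block K) {f \<in> space (coin_block K). Q (bits_val K f)} =
    card {v. v < 2 ^ K \<and> Q v} / 2 ^ K"
proof -
  let ?S = "{f \<in> space (coin_block K). Q (bits_val K f)}"
  interpret B: prob_space "coin_block K" by (rule prob_space_coin_block)
  have singleton: "measure (coin_block K) {f} = 1 / 2 ^ K" if "f \<in> space (coin_block K)" for f
  proof -
    have "{f} = Pi\<^sub>E {..<K} (\<lambda>k. {f k})"
      using that by (auto simp: space_coin_block PiE_iff extensional_def fun_eq_iff)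
    then have "emeasure (coin_block K) {f} = (\<Prod>k<K. ennreal (1 / 2))"
      by (simp add: emeasure_coin_block_PiE coins.M.emeasure_eq_measure measure_coin)
    also have "\<dots> = ennreal (1 / 2) ^ K" by simp
    also have "\<dots> = ennreal ((1 / 2) ^ K)" by (rule ennreal_power) simp
    finally show ?thesis by (simp add: B.emeasure_eq_measure power_one_over)
  qed
  have "finite (space (coin_block K))" by (simp add: space_coin_block finite_PiE)
  then have "measure (coin_block K) ?S = (\<Sum>f\<in>?S. measure (coin_block K) {f})"
    by (intro measure_eq_sum_singleton) (auto simp: sets_coin_block space_coin_block intro:
      finite_subset)
  also have "\<dots> = card ?S / 2 ^ K" using singleton by simp
  also have "card ?S = card {v. v < 2 ^ K \<and> Q v}"
    by (rule bij_betw_same_card[of "bits_val K"])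
      (use bij_betw_bits_val[of K] in \<open>auto simp: space_coin_block bij_betw_def inj_on_def\<close>)
  finally show ?thesis .
qed

definition unblock :: "nat \<Rightarrow> (nat \<Rightarrow> nat \<Rightarrow> bool) \<Rightarrow> nat \<Rightarrow> bool" where
  "unblock K \<omega> t = \<omega> (t div K) (t mod K)"

abbreviation "coin_seqs \<equiv> Pi\<^sub>M (UNIV :: nat set) (\<lambda>_. coin)"
abbreviation "block_seqs K \<equiv> Pi\<^sub>M (UNIV :: nat set) (\<lambda>_. coin_block K)"

interpretation blocks: product_prob_space "\<lambda>_::nat. coin_block K" I for K I
  by (rule product_prob_spaceI) (rule prob_space_coin_block)

lemma space_coin_seqs: "space coin_seqs = UNIV"
  by (simp add: space_PiM PiE_def extensional_def)

lemma measurable_unblock: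
  assumes "K > 0"
  shows "unblock K \<in> measurable (block_seqs K) coin_seqs"
proof -
  have "(\<lambda>\<omega> t. \<omega> (t div K) (t mod K)) \<in> measurable (block_seqs K) coin_seqs"
  proof (rule measurable_PiM_single')
    fix t :: nat
    have "(\<lambda>\<omega>. \<omega> (t div K)) \<in> measurable (block_seqs K) (coin_block K)"
      by (rule measurable_component_singleton) simp
    moreover have "(\<lambda>f. f (t mod K)) \<in> measurable (coin_block K) coin"
      unfolding coin_block_def by (rule measurable_component_singleton) (simp add: assms)
    ultimately show "(\<lambda>\<omega>. \<omega> (t div K) (t mod K)) \<in> measurable (block_seqs K) coin"
      by (simp add: measurable_comp[unfolded comp_def])
  qed (simp add: PiE_def extensional_def)
  then show ?thesis by (simp add: unblock_def[abs_def])
qed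

lemma unblock_vimage_eq:
  fixes J :: "nat set" and F :: "nat \<Rightarrow> bool set"
  assumes K: "K > 0"
  defines "B \<equiv> \<lambda>i. Pi\<^sub>E {..<K} (\<lambda>k. if i * K + k \<in> J then F (i * K + k) else UNIV)"
  shows "unblock K -` {\<omega>. \<forall>j\<in>J. \<omega> j \<in> F j} \<inter> space (block_seqs K) =
    {\<omega> \<in> space (block_seqs K). \<forall>i\<in>(\<lambda>j. j div K) ` J. \<omega> i \<in> B i}"
proof -
  have "(\<forall>j\<in>J. \<omega> (j div K) (j mod K) \<in> F j) \<longleftrightarrow> (\<forall>i\<in>(\<lambda>j. j div K) ` J. \<omega> i \<in> B i)"
    if "\<omega> \<in> space (block_seqs K)" for \<omega>
  proof
    assume F: "\<forall>j\<in>J. \<omega> (j div K) (j mod K) \<in> F j"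
    show "\<forall>i\<in>(\<lambda>j. j div K) ` J. \<omega> i \<in> B i"
    proof
      fix i
      have "\<omega> i k \<in> F (i * K + k)" if "k < K" "i * K + k \<in> J" for k
        using F[rule_format, OF that(2)] that(1) K by simp
      moreover have "\<omega> i \<in> {..<K} \<rightarrow>\<^sub>E UNIV"
        using \<open>\<omega> \<in> space (block_seqs K)\<close> by (auto simp: space_PiM space_coin_block)
      ultimately show "\<omega> i \<in> B i" by (auto simp: B_def PiE_iff)
    qed
  next
    assume B: "\<forall>i\<in>(\<lambda>j. j div K) ` J. \<omega> i \<in> B i"
    show "\<forall>j\<in>J. \<omega> (j div K) (j mod K) \<in> F j"
    proof
      fix j assume "j \<in> J"
      then have "\<omega> (j div K) \<in> B (j div K)" using B by blast
      then have "\<forall>k\<in>{..<K}. \<omega> (j div K) k \<in>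
          (if j div K * K + k \<in> J then F (j div K * K + k) else UNIV)"
        unfolding B_def PiE_iff by blast
      then have "\<omega> (j div K) (j mod K) \<in>
          (if j div K * K + j mod K \<in> J then F (j div K * K + j mod K) else UNIV)"
        by (rule bspec) (simp add: K)
      then show "\<omega> (j div K) (j mod K) \<in> F j" using \<open>j \<in> J\<close> by simp
    qed
  qed
  then show ?thesis by (auto simp: unblock_def)
qed

lemma prod_blocks_eq:
  fixes K :: nat and h :: "nat \<Rightarrow> 'a :: comm_monoid_mult"
  assumes K: "K > 0" and J: "finite J" and h: "\<And>j. j \<notin> J \<Longrightarrow> h j = 1"
  shows "(\<Prod>i\<in>(\<lambda>j. j div K) ` J. \<Prod>k<K. h (i * K + k)) = (\<Prod>j\<in>J. h j)"
    (is "?lhs = _")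
proof -
  let ?idx = "\<lambda>(i, k). i * K + k"
  let ?I = "(\<lambda>j. j div K) ` J \<times> {..<K}"
  have "?lhs = (\<Prod>z\<in>?I. h (?idx z))"
    by (simp add: prod.cartesian_product split_def)
  also have "\<dots> = (\<Prod>j\<in>?idx ` ?I. h j)"
  proof (rule prod.reindex[symmetric, unfolded comp_def])
    show "inj_on ?idx ?I"
    proof (rule inj_onI, clarify)
      fix i k i' k' :: nat assume k: "k < K" "k' < K" and eq: "i * K + k = i' * K + k'"
      have "(i * K + k) div K = (i' * K + k') div K" "(i * K + k) mod K = (i' * K + k') mod K"
        by (simp_all only: eq)
      then show "i = i' \<and> k = k'" using k by simp
    qed
  qed
  also have "\<dots> = (\<Prod>j\<in>J. h j)"
  proof (rule prod.mono_neutral_right)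
    show "finite (?idx ` ?I)" using J by simp
    show "J \<subseteq> ?idx ` ?I"
    proof
      fix j assume "j \<in> J"
      then show "j \<in> ?idx ` ?I"
        using K by (intro image_eqI[where x = "(j div K, j mod K)"]) auto
    qed
    show "\<forall>j\<in>?idx ` ?I - J. h j = 1" using h by simp
  qed
  finally show ?thesis .
qed

lemma distr_unblock:
  assumes K: "K > 0"
  shows "distr (block_seqs K) coin_seqs (unblock K) = coin_seqs"
proof (rule measure_eqI_PiM_infinite[where I = UNIV and M = "\<lambda>_. coin"])
  show "sets (distr (block_seqs K) coin_seqs (unblock K)) = sets coin_seqs"
    "sets coin_seqs = sets coin_seqs"
    by simp_all
  show "finite_measure (distr (block_seqs K) coin_seqs (unblock K))"
    using blocks.prob_space_distr[OF measurable_unblock[OF K]] by (simp add: prob_space_def)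
next
  fix F and J :: "nat set"
  assume J: "finite J" and F: "\<And>i. i \<in> J \<Longrightarrow> F i \<in> sets coin"
  let ?E = "prod_emb UNIV (\<lambda>_. coin) J (Pi\<^sub>E J F)"
  let ?B = "\<lambda>i. Pi\<^sub>E {..<K} (\<lambda>k. if i * K + k \<in> J then F (i * K + k) else UNIV)"
  let ?h = "\<lambda>j. emeasure coin (if j \<in> J then F j else UNIV)"
  have E: "?E = {\<omega>. \<forall>j\<in>J. \<omega> j \<in> F j}"
    by (auto simp: prod_emb_iff PiE_def extensional_def Pi_iff)
  have "emeasure (distr (block_seqs K) coin_seqs (unblock K)) ?E =
      emeasure (block_seqs K) (unblock K -` ?E \<inter> space (block_seqs K))"
    using J F by (intro emeasure_distr measurable_unblock K sets_PiM_I) auto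
  also have "\<dots> = (\<Prod>i\<in>(\<lambda>j. j div K) ` J. emeasure (coin_block K) (?B i))"
    unfolding E unblock_vimage_eq[OF K]
    by (rule blocks.emeasure_PiM_Collect) (auto simp: J sets_coin_block)
  also have "\<dots> = (\<Prod>i\<in>(\<lambda>j. j div K) ` J. \<Prod>k<K. ?h (i * K + k))"
    by (simp add: emeasure_coin_block_PiE if_distrib)
  also have "\<dots> = (\<Prod>j\<in>J. ?h j)"
    using K J by (rule prod_blocks_eq) (simp add: coins.M.emeasure_space_1[simplified])
  also have "\<dots> = emeasure coin_seqs ?E"
    using J F by (simp add: coins.emeasure_PiM_emb)
  finally show "emeasure (distr (block_seqs K) coin_seqs (unblock K)) ?E = emeasure coin_seqs ?E" .
qed

section \<open>Primitive recursion via a compiled expression language\<close>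

fun prim_val :: "recf \<Rightarrow> nat list \<Rightarrow> nat" where
  "prim_val Zer xs = 0"
| "prim_val Succ xs = Suc (hd xs)"
| "prim_val (Proj i) xs = xs ! i"
| "prim_val (Comp f gs) xs = prim_val f (map (\<lambda>g. prim_val g xs) gs)"
| "prim_val (PrimRec f g) xs =
    rec_nat (prim_val f (tl xs)) (\<lambda>n y. prim_val g (n # y # tl xs)) (hd xs)"
| "prim_val (Mu f) xs = 0"

fun prim_arity :: "nat \<Rightarrow> recf \<Rightarrow> bool" where
  "prim_arity k Zer = True"
| "prim_arity k Succ = (k \<ge> 1)"
| "prim_arity k (Proj i) = (i < k)"
| "prim_arity k (Comp f gs) = (prim_arity (length gs) f \<and> (\<forall>g\<in>set gs. prim_arity k g))"
| "prim_arity k (PrimRec f g) = (k \<ge> 1 \<and> prim_arity (k - 1) f \<and> prim_arity (k + 1) g)"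
| "prim_arity k (Mu f) = False"

lemma rec_eval_prim_val: "prim_arity k f \<Longrightarrow> length xs = k \<Longrightarrow> rec_eval f xs (prim_val f xs)"
proof (induction f arbitrary: k xs)
  case Zer then show ?case by (simp add: rec_eval.zer)
next
  case Succ then show ?case by (cases xs) (auto intro: rec_eval.succ)
next
  case (Proj i) then show ?case by (auto intro: rec_eval.proj)
next
  case (Comp f gs)
  have w: "prim_arity (length gs) f" "\<And>g. g \<in> set gs \<Longrightarrow> prim_arity k g" using Comp.prems by auto
  have a: "\<forall>i<length gs. rec_eval (gs ! i) xs (map (\<lambda>g. prim_val g xs) gs ! i)"
  proof (intro allI impI)
    fix i assume i: "i < length gs"
    then have "gs ! i \<in> set gs" by (rule nth_mem)
    then have "rec_eval (gs ! i) xs (prim_val (gs ! i) xs)"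
      using Comp.IH(2)[of "gs ! i" k xs] w Comp.prems by auto
    then show "rec_eval (gs ! i) xs (map (\<lambda>g. prim_val g xs) gs ! i)" using i by simp
  qed
  have b: "rec_eval f (map (\<lambda>g. prim_val g xs) gs) (prim_val f (map (\<lambda>g. prim_val g xs) gs))"
    using Comp.IH(1)[of "length gs"] w by auto
  show ?case
    using rec_eval.comp[of "map (\<lambda>g. prim_val g xs) gs" gs xs f, OF _ a b] by simp
next
  case (PrimRec f g)
  then obtain n ys where xs: "xs = n # ys" and ly: "length ys = k - 1"
    by (cases xs) auto
  have "rec_eval (PrimRec f g) (n # ys)
      (rec_nat (prim_val f ys) (\<lambda>n y. prim_val g (n # y # ys)) n)" for n
  proof (induction n)
    case 0 then show ?case using PrimRec ly by (auto intro: rec_eval.prim0)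
  next
    case (Suc n) then show ?case using PrimRec ly by (auto intro: rec_eval.primS)
  qed
  then show ?case by (simp add: xs)
next
  case (Mu f) then show ?case by simp
qed

text \<open>\<open>Loop n i body\<close> iterates \<open>body\<close> \<open>n\<close> times starting from \<open>i\<close>; in \<open>body\<close>, \<open>Var 0\<close> is the
  counter, \<open>Var 1\<close> the accumulator and \<open>Var (k + 2)\<close> the outer \<open>Var k\<close>.\<close>

datatype nexp = Var nat | Lit nat | Plus nexp nexp | Minus nexp nexp | Times nexp nexp
  | If nexp nexp nexp | Loop nexp nexp nexp

fun nval :: "nat list \<Rightarrow> nexp \<Rightarrow> nat" where
  "nval env (Var i) = env ! i"
| "nval env (Lit n) = n"
| "nval env (Plus a b) = nval env a + nval env b"
| "nval env (Minus a b) = nval env a - nval env b"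
| "nval env (Times a b) = nval env a * nval env b"
| "nval env (If c a b) = (if nval env c \<noteq> 0 then nval env a else nval env b)"
| "nval env (Loop b i body) = rec_nat (nval env i) (\<lambda>n y. nval (n # y # env) body) (nval env b)"

fun vars_below :: "nat \<Rightarrow> nexp \<Rightarrow> bool" where
  "vars_below k (Var i) = (i < k)"
| "vars_below k (Lit n) = True"
| "vars_below k (Plus a b) = (vars_below k a \<and> vars_below k b)"
| "vars_below k (Minus a b) = (vars_below k a \<and> vars_below k b)"
| "vars_below k (Times a b) = (vars_below k a \<and> vars_below k b)"
| "vars_below k (If c a b) = (vars_below k c \<and> vars_below k a \<and> vars_below k b)"
| "vars_below k (Loop b i body) = (vars_below k b \<and> vars_below k i \<and> vars_below (k + 2) body)"

fun const_rf :: "nat \<Rightarrow> recf" where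
  "const_rf 0 = Zer"
| "const_rf (Suc n) = Comp Succ [const_rf n]"

lemma const_rf_simps[simp]: "prim_arity k (const_rf n)" "prim_val (const_rf n) xs = n"
  by (induction n) auto

definition rf_add :: recf where
  "rf_add = PrimRec (Proj 0) (Comp Succ [Proj 1])"
lemma rf_add_simps[simp]: "prim_arity (Suc (Suc 0)) rf_add" "prim_val rf_add [a, b] = a + b"
  by (simp_all add: rf_add_def) (induction a; simp)

definition rf_mul :: recf where
  "rf_mul = PrimRec Zer (Comp rf_add [Proj 1, Proj 2])"
lemma rf_mul_simps[simp]: "prim_arity (Suc (Suc 0)) rf_mul" "prim_val rf_mul [a, b] = a * b"
  by (simp_all add: rf_mul_def) (induction a; simp)

definition rf_pred :: recf where
  "rf_pred = PrimRec Zer (Proj 0)"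
lemma rf_pred_simps[simp]: "prim_arity (Suc 0) rf_pred" "prim_val rf_pred [a] = a - 1"
  by (simp_all add: rf_pred_def) (cases a; simp)

definition rf_sub_rev :: recf where
  "rf_sub_rev = PrimRec (Proj 0) (Comp rf_pred [Proj 1])"
lemma rf_sub_rev_simps[simp]: "prim_arity (Suc (Suc 0)) rf_sub_rev"
  "prim_val rf_sub_rev [b, a] = a - b"
  by (simp_all add: rf_sub_rev_def) (induction b; simp)

definition rf_sub :: recf where
  "rf_sub = Comp rf_sub_rev [Proj 1, Proj 0]"
lemma rf_sub_simps[simp]: "prim_arity (Suc (Suc 0)) rf_sub" "prim_val rf_sub [a, b] = a - b"
  by (simp_all add: rf_sub_def)

definition rf_if :: recf where
  "rf_if = PrimRec (Proj 1) (Proj 2)"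
lemma rf_if_simps[simp]: "prim_arity (Suc (Suc (Suc 0))) rf_if"
  "prim_val rf_if [c, a, b] = (if c \<noteq> 0 then a else b)"
  by (simp_all add: rf_if_def) (cases c; simp)

fun compile :: "nat \<Rightarrow> nexp \<Rightarrow> recf" where
  "compile k (Var i) = Proj i"
| "compile k (Lit n) = const_rf n"
| "compile k (Plus a b) = Comp rf_add [compile k a, compile k b]"
| "compile k (Minus a b) = Comp rf_sub [compile k a, compile k b]"
| "compile k (Times a b) = Comp rf_mul [compile k a, compile k b]"
| "compile k (If c a b) = Comp rf_if [compile k c, compile k a, compile k b]"
| "compile k (Loop b i body) =
    Comp (PrimRec (compile k i) (compile (k + 2) body)) (compile k b # map Proj [0..<k])"

lemma map_prim_val_Proj: "length env = k \<Longrightarrow> map (\<lambda>g. prim_val g env) (map Proj [0..<k]) = env"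
  by (simp add: list_eq_iff_nth_eq)

lemma compile_correct: "vars_below k e \<Longrightarrow> prim_arity k (compile k e) \<and>
  (\<forall>env. length env = k \<longrightarrow> prim_val (compile k e) env = nval env e)"
proof (induction e arbitrary: k)
  case (Loop b i body)
  then have ih: "prim_arity k (compile k b)" "prim_arity k (compile k i)"
    "prim_arity (k+2) (compile (k+2) body)"
    "\<And>env. length env = k \<Longrightarrow> prim_val (compile k b) env = nval env b"
    "\<And>env. length env = k \<Longrightarrow> prim_val (compile k i) env = nval env i"
    "\<And>env. length env = k + 2 \<Longrightarrow> prim_val (compile (k+2) body) env = nval env body"
    by auto
  show ?case
  proof (intro conjI allI impI)
    show "prim_arity k (compile k (Loop b i body))" using ih by (auto simp: numeral_2_eq_2)
  next
    fix env :: "nat list" assume l: "length env = k"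
    have m: "map (\<lambda>g. prim_val g env) (map Proj [0..<k]) = env" using map_prim_val_Proj[OF l] .
    have "(\<lambda>n y. prim_val (compile (k + 2) body) (n # y # env)) = (\<lambda>n y. nval (n # y # env) body)"
      using ih(6) l by auto
    then show "prim_val (compile k (Loop b i body)) env = nval env (Loop b i body)"
      using ih l m by simp
  qed
qed auto

lemma rec_eval_compile: "vars_below 1 e \<Longrightarrow> rec_eval (compile 1 e) [x] (nval [x] e)"
  using compile_correct[of 1 e] rec_eval_prim_val[of 1 "compile 1 e" "[x]"] by auto

fun shift_from :: "nat \<Rightarrow> nexp \<Rightarrow> nexp" where
  "shift_from c (Var i) = Var (if i < c then i else i + 2)"
| "shift_from c (Lit n) = Lit n"
| "shift_from c (Plus a b) = Plus (shift_from c a) (shift_from c b)"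
| "shift_from c (Minus a b) = Minus (shift_from c a) (shift_from c b)"
| "shift_from c (Times a b) = Times (shift_from c a) (shift_from c b)"
| "shift_from c (If x a b) = If (shift_from c x) (shift_from c a) (shift_from c b)"
| "shift_from c (Loop b i body) = Loop (shift_from c b) (shift_from c i) (shift_from (c + 2) body)"

lemma nval_shift_from:
  "length xs = c \<Longrightarrow> nval (xs @ a # b # env) (shift_from c e) = nval (xs @ env) e"
proof (induction e arbitrary: c xs)
  case (Var i) then show ?case by (auto simp: nth_append)
next
  case (Loop b1 i1 body)
  have "nval ((n # y # xs) @ a # b # env) (shift_from (c + 2) body) =
      nval ((n # y # xs) @ env) body" for n y
    using Loop.IH(3)[of "n # y # xs"] Loop.prems by simp
  then show ?case using Loop.IH(1)[OF Loop.prems] Loop.IH(2)[OF Loop.prems] by simp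
qed auto

lemma vars_below_shift_from: "c \<le> k \<Longrightarrow> vars_below (k + 2) (shift_from c e) = vars_below k e"
  by (induction e arbitrary: c k) auto

definition shift2 :: "nexp \<Rightarrow> nexp" where "shift2 = shift_from 0"

lemma nval_shift2[simp]: "nval (a # b # env) (shift2 e) = nval env e"
  using nval_shift_from[of "[]" 0 a b env e] by (simp add: shift2_def)

lemma vars_below_shift2[simp]: "vars_below (k + 2) (shift2 e) = vars_below k e"
  using vars_below_shift_from[of 0 k e] by (simp add: shift2_def)

lemma vars_below_shift2'[simp]: "vars_below (Suc (Suc k)) (shift2 e) = vars_below k e"
  using vars_below_shift2 by simp

lemma if_one_zero_simps[simp]: "(0 < (if P then 1 else (0::nat))) = P"
  "((if P then 1 else (0::nat)) \<noteq> 0) = P"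
  "(0 < (if P then Suc 0 else (0::nat))) = P" "((if P then Suc 0 else (0::nat)) \<noteq> 0) = P"
  by auto

definition Eq :: "nexp \<Rightarrow> nexp \<Rightarrow> nexp" where
  "Eq a b = If (Plus (Minus a b) (Minus b a)) (Lit 0) (Lit 1)"
lemma Eq_simps[simp]: "nval env (Eq a b) = (if nval env a = nval env b then 1 else 0)"
  "vars_below k (Eq a b) \<longleftrightarrow> vars_below k a \<and> vars_below k b"
  by (auto simp: Eq_def)

definition Tri :: "nexp \<Rightarrow> nexp" where
  "Tri e = Loop e (Lit 0) (Plus (Var 1) (Plus (Var 0) (Lit 1)))"
lemma Tri_simps[simp]: "nval env (Tri e) = triangle (nval env e)"
  "vars_below k (Tri e) \<longleftrightarrow> vars_below k e"
proof -
  have "rec_nat 0 (\<lambda>n y. y + (n + 1)) m = triangle m" for m by (induction m) auto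
  then show "nval env (Tri e) = triangle (nval env e)" by (simp add: Tri_def)
qed (simp add: Tri_def)

definition Penc :: "nexp \<Rightarrow> nexp \<Rightarrow> nexp" where
  "Penc a b = Plus (Tri (Plus a b)) a"
lemma Penc_simps[simp]: "nval env (Penc a b) = prod_encode (nval env a, nval env b)"
  "vars_below k (Penc a b) \<longleftrightarrow> vars_below k a \<and> vars_below k b"
  by (auto simp: Penc_def prod_encode_def)

text \<open>The largest \<open>s\<close> with \<open>triangle s \<le> z\<close>, from which \<open>prod_decode\<close> is computed.\<close>

definition tri_root :: "nat \<Rightarrow> nat" where
  "tri_root z = rec_nat 0 (\<lambda>n y. if triangle (y + 1) - (n + 1) \<noteq> 0 then y else y + 1) z"

definition TriRoot :: "nexp \<Rightarrow> nexp" where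
  "TriRoot e = Loop e (Lit 0) (If (Minus (Tri (Plus (Var 1) (Lit 1))) (Plus (Var 0) (Lit 1)))
    (Var 1) (Plus (Var 1) (Lit 1)))"

lemma TriRoot_simps[simp]: "nval env (TriRoot e) = tri_root (nval env e)"
  "vars_below k (TriRoot e) \<longleftrightarrow> vars_below k e"
  by (auto simp: TriRoot_def tri_root_def cong: if_cong)

lemma tri_root_bounds: "triangle (tri_root z) \<le> z \<and> z < triangle (Suc (tri_root z))"
proof (induction z)
  case 0 then show ?case by (simp add: tri_root_def)
next
  case (Suc z)
  have e: "tri_root (Suc z) =
      (if triangle (tri_root z + 1) - (z + 1) \<noteq> 0 then tri_root z else tri_root z + 1)"
    by (simp add: tri_root_def)
  show ?case
  proof (cases "triangle (tri_root z + 1) - (z + 1) \<noteq> 0")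
    case True then show ?thesis using Suc e by auto
  next
    case False
    then have "triangle (tri_root z + 1) = z + 1" using Suc by auto
    then show ?thesis using e False by simp
  qed
qed

lemma prod_decode_tri_root: "prod_decode z =
  (z - triangle (tri_root z), tri_root z - (z - triangle (tri_root z)))"
proof -
  have i: "triangle (tri_root z) \<le> z" "z < triangle (tri_root z) + Suc (tri_root z)"
    using tri_root_bounds[of z] by auto
  have "prod_encode (z - triangle (tri_root z), tri_root z - (z - triangle (tri_root z))) = z"
    using i by (simp add: prod_encode_def)
  then show ?thesis by (metis prod_encode_inverse)
qed

definition Pfst :: "nexp \<Rightarrow> nexp" where
  "Pfst e = Minus e (Tri (TriRoot e))"
definition Psnd :: "nexp \<Rightarrow> nexp" where
  "Psnd e = Minus (TriRoot e) (Pfst e)"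
lemma Pfst_simps[simp]: "nval env (Pfst e) = fst (prod_decode (nval env e))"
  "vars_below k (Pfst e) \<longleftrightarrow> vars_below k e"
  by (auto simp: Pfst_def prod_decode_tri_root)
lemma Psnd_simps[simp]: "nval env (Psnd e) = snd (prod_decode (nval env e))"
  "vars_below k (Psnd e) \<longleftrightarrow> vars_below k e"
  by (auto simp: Psnd_def prod_decode_tri_root)

text \<open>Head and tail for \<open>list_encode\<close>, which codes \<open>x # xs\<close> as
  \<open>Suc (prod_encode (x, list_encode xs))\<close>.\<close>

definition code_hd :: "nat \<Rightarrow> nat" where "code_hd l = fst (prod_decode (l - 1))"
definition code_tl :: "nat \<Rightarrow> nat" where "code_tl l = snd (prod_decode (l - 1))"

lemma code_hd_tl_Cons[simp]: "code_hd (Suc (prod_encode (x, y))) = x"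
  "code_tl (Suc (prod_encode (x, y))) = y"
  by (simp_all add: code_hd_def code_tl_def prod_encode_inverse)

lemma code_tl_0[simp]: "code_tl 0 = 0"
  by (simp add: code_tl_def prod_decode_def prod_decode_aux.simps)

lemma code_tl_pow_0[simp]: "(code_tl ^^ i) 0 = 0"
  by (induction i) auto

definition Hd :: "nexp \<Rightarrow> nexp" where
  "Hd e = Pfst (Minus e (Lit 1))"
definition Tl :: "nexp \<Rightarrow> nexp" where
  "Tl e = Psnd (Minus e (Lit 1))"
lemma Hd_simps[simp]: "nval env (Hd e) = code_hd (nval env e)"
  "vars_below k (Hd e) \<longleftrightarrow> vars_below k e"
  by (auto simp: Hd_def code_hd_def)
lemma Tl_simps[simp]: "nval env (Tl e) = code_tl (nval env e)"
  "vars_below k (Tl e) \<longleftrightarrow> vars_below k e"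
  by (auto simp: Tl_def code_tl_def)

definition TlPow :: "nexp \<Rightarrow> nexp \<Rightarrow> nexp" where
  "TlPow i l = Loop i l (Tl (Var 1))"
lemma TlPow_simps[simp]: "nval env (TlPow i l) = (code_tl ^^ (nval env i)) (nval env l)"
  "vars_below k (TlPow i l) \<longleftrightarrow> vars_below k i \<and> vars_below k l"
proof -
  have "rec_nat a (\<lambda>n y. code_tl y) m = (code_tl ^^ m) a" for a m by (induction m) auto
  then show "nval env (TlPow i l) = (code_tl ^^ (nval env i)) (nval env l)" by (simp add: TlPow_def)
qed (auto simp: TlPow_def)

lemma code_tl_pow_list_encode: "(code_tl ^^ i) (list_encode xs) = list_encode (drop i xs)"
proof (induction i arbitrary: xs)
  case (Suc i) then show ?case
    by (cases xs) (simp_all add: funpow_Suc_right del: funpow.simps)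
qed simp

definition Nth :: "nexp \<Rightarrow> nexp \<Rightarrow> nexp" where
  "Nth l i = Hd (TlPow i l)"
lemma Nth_simps[simp]: "nval env (Nth l i) = code_hd ((code_tl ^^ (nval env i)) (nval env l))"
  "vars_below k (Nth l i) \<longleftrightarrow> vars_below k i \<and> vars_below k l"
  by (auto simp: Nth_def)

definition LCons :: "nexp \<Rightarrow> nexp \<Rightarrow> nexp" where
  "LCons h t = Plus (Penc h t) (Lit 1)"
lemma LCons_simps[simp]: "nval env (LCons h t) = Suc (prod_encode (nval env h, nval env t))"
  "vars_below k (LCons h t) \<longleftrightarrow> vars_below k h \<and> vars_below k t"
  by (auto simp: LCons_def)

definition Pow2 :: "nexp \<Rightarrow> nexp" where
  "Pow2 e = Loop e (Lit 1) (Times (Lit 2) (Var 1))"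
lemma Pow2_simps[simp]: "nval env (Pow2 e) = 2 ^ (nval env e)"
  "vars_below k (Pow2 e) \<longleftrightarrow> vars_below k e"
proof -
  have "rec_nat 1 (\<lambda>n y. 2 * y) m = (2::nat) ^ m" for m by (induction m) auto
  then show "nval env (Pow2 e) = 2 ^ (nval env e)" by (simp add: Pow2_def)
qed (auto simp: Pow2_def)

definition Mod :: "nexp \<Rightarrow> nexp \<Rightarrow> nexp" where
  "Mod x d = Loop x (Lit 0) (If (Eq (Plus (Var 1) (Lit 1)) (shift2 d)) (Lit 0)
    (Plus (Var 1) (Lit 1)))"
lemma Mod_simps[simp]: "nval env (Mod x d) = nval env x mod nval env d"
  "vars_below k (Mod x d) \<longleftrightarrow> vars_below k x \<and> vars_below k d"
proof -
  have "rec_nat 0 (\<lambda>n y. if y + 1 = D then 0 else y + 1) m = m mod D" for m D :: nat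
    by (induction m) (auto simp: mod_Suc)
  then show "nval env (Mod x d) = nval env x mod nval env d" by (simp add: Mod_def cong: if_cong)
qed (auto simp: Mod_def)

definition Div :: "nexp \<Rightarrow> nexp \<Rightarrow> nexp" where
  "Div x d = Loop x (Lit 0) (Plus (Var 1)
    (If (Mod (Plus (Var 0) (Lit 1)) (shift2 d)) (Lit 0) (Lit 1)))"
lemma Div_simps[simp]: "nval env (Div x d) = nval env x div nval env d"
  "vars_below k (Div x d) \<longleftrightarrow> vars_below k x \<and> vars_below k d"
proof -
  have "rec_nat 0 (\<lambda>n y. y + (if (n + 1) mod D \<noteq> 0 then 0 else 1)) m = m div D" for m D :: nat
    by (induction m) (auto simp: div_Suc)
  then show "nval env (Div x d) = nval env x div nval env d" by (simp add: Div_def cong: if_cong)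
qed (auto simp: Div_def)

definition Le :: "nexp \<Rightarrow> nexp \<Rightarrow> nexp" where
  "Le a b = If (Minus a b) (Lit 0) (Lit 1)"
definition Lt :: "nexp \<Rightarrow> nexp \<Rightarrow> nexp" where
  "Lt a b = If (Minus b a) (Lit 1) (Lit 0)"
lemma Le_simps[simp]: "nval env (Le a b) = (if nval env a \<le> nval env b then 1 else 0)"
  "vars_below k (Le a b) \<longleftrightarrow> vars_below k a \<and> vars_below k b"
  by (auto simp: Le_def)
lemma Lt_simps[simp]: "nval env (Lt a b) = (if nval env a < nval env b then 1 else 0)"
  "vars_below k (Lt a b) \<longleftrightarrow> vars_below k a \<and> vars_below k b"
  by (auto simp: Lt_def)

definition List5 :: "nexp \<Rightarrow> nexp \<Rightarrow> nexp \<Rightarrow> nexp \<Rightarrow> nexp \<Rightarrow> nexp" where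
  "List5 a b c d e = LCons a (LCons b (LCons c (LCons d (LCons e (Lit 0)))))"
lemma List5_simps[simp]:
  "nval env (List5 a b c d e) =
    list_encode [nval env a, nval env b, nval env c, nval env d, nval env e]"
  "vars_below k (List5 a b c d e) \<longleftrightarrow>
    vars_below k a \<and> vars_below k b \<and> vars_below k c \<and> vars_below k d \<and> vars_below k e"
  by (auto simp: List5_def)

section \<open>The construction on codes\<close>

text \<open>All functions below act on the number \<open>y = encode_code D\<close>. Let \<open>n\<close>, \<open>m\<close> be the numbers
  of states and letters of \<open>D\<close>. One transition of \<open>D\<close> is simulated by \<open>K = enc_flips y\<close> fair
  coins; \<open>K\<close> exceeds every exponent of an entry of \<open>D\<close> because the exponents are bounded by the
  code of the transition list. The simple automaton keeps the states \<open>q < n\<close> of \<open>D\<close>. The new letter \<open>m\<close> pads each letter of \<open>D\<close> to a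
  block of \<open>K\<close> letters.\<close>

definition enc_nstates :: "nat \<Rightarrow> nat" where
  "enc_nstates y = code_hd y"
definition enc_nletters :: "nat \<Rightarrow> nat" where
  "enc_nletters y = code_hd (code_tl y)"
definition enc_init :: "nat \<Rightarrow> nat" where
  "enc_init y = code_hd ((code_tl ^^ 2) y)"
definition enc_trans :: "nat \<Rightarrow> nat" where
  "enc_trans y = code_hd ((code_tl ^^ 3) y)"
definition enc_rabin :: "nat \<Rightarrow> nat" where
  "enc_rabin y = code_hd ((code_tl ^^ 4) y)"
definition enc_flips :: "nat \<Rightarrow> nat" where
  "enc_flips y = enc_trans y + 1"
definition enc_width :: "nat \<Rightarrow> nat" where
  "enc_width y = (2::nat) ^ enc_flips y"
definition enc_base :: "nat \<Rightarrow> nat" where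
  "enc_base y = enc_nstates y + enc_rabin y"
definition enc_sink :: "nat \<Rightarrow> nat" where
  "enc_sink y = enc_base y + enc_nstates y * enc_nletters y * enc_width y"

definition NStatesE :: "nexp \<Rightarrow> nexp" where
  "NStatesE x = Nth x (Lit 0)"
definition NLettersE :: "nexp \<Rightarrow> nexp" where
  "NLettersE x = Nth x (Lit 1)"
definition InitE :: "nexp \<Rightarrow> nexp" where
  "InitE x = Nth x (Lit 2)"
definition TransE :: "nexp \<Rightarrow> nexp" where
  "TransE x = Nth x (Lit 3)"
definition RabinE :: "nexp \<Rightarrow> nexp" where
  "RabinE x = Nth x (Lit 4)"
definition FlipsE :: "nexp \<Rightarrow> nexp" where
  "FlipsE x = Plus (TransE x) (Lit 1)"
definition WidthE :: "nexp \<Rightarrow> nexp" where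
  "WidthE x = Pow2 (FlipsE x)"
definition BaseE :: "nexp \<Rightarrow> nexp" where
  "BaseE x = Plus (NStatesE x) (RabinE x)"
definition SinkE :: "nexp \<Rightarrow> nexp" where
  "SinkE x = Plus (BaseE x) (Times (Times (NStatesE x) (NLettersE x)) (WidthE x))"

lemma nval_enc_fields[simp]:
  "nval env (NStatesE x) = enc_nstates (nval env x)"
  "nval env (NLettersE x) = enc_nletters (nval env x)"
  "nval env (InitE x) = enc_init (nval env x)"
  "nval env (TransE x) = enc_trans (nval env x)"
  "nval env (RabinE x) = enc_rabin (nval env x)"
  "nval env (FlipsE x) = enc_flips (nval env x)"
  "nval env (WidthE x) = enc_width (nval env x)"
  "nval env (BaseE x) = enc_base (nval env x)"
  "nval env (SinkE x) = enc_sink (nval env x)"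
  by (simp_all add: NStatesE_def NLettersE_def InitE_def TransE_def RabinE_def FlipsE_def WidthE_def
      BaseE_def SinkE_def enc_nstates_def enc_nletters_def enc_init_def enc_trans_def enc_rabin_def
      enc_flips_def enc_width_def enc_base_def enc_sink_def numeral_eq_Suc)

lemma vars_below_enc_fields[simp]:
  "vars_below k (NStatesE x) = vars_below k x"
  "vars_below k (NLettersE x) = vars_below k x"
  "vars_below k (InitE x) = vars_below k x"
  "vars_below k (TransE x) = vars_below k x"
  "vars_below k (RabinE x) = vars_below k x"
  "vars_below k (FlipsE x) = vars_below k x"
  "vars_below k (WidthE x) = vars_below k x"
  "vars_below k (BaseE x) = vars_below k x"
  "vars_below k (SinkE x) = vars_below k x"
  by (simp_all add: NStatesE_def NLettersE_def InitE_def TransE_def RabinE_def FlipsE_def WidthE_def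
      BaseE_def SinkE_def)

text \<open>An entry \<open>(q, a, p, u, e)\<close> of \<open>D\<close> with probability \<open>u / 2 ^ e\<close> gets the weight
  \<open>u * 2 ^ (K - e)\<close>. Scanning the entries for \<open>(q, a)\<close> in order, each claims the next interval
  of that many values; \<open>target y q a v\<close> is the target of the entry claiming \<open>v < 2 ^ K\<close>.
  The scan state is a coded pair (found target + 1, start of the current interval).\<close>

definition entry_weight :: "nat \<Rightarrow> nat \<Rightarrow> nat \<Rightarrow> nat \<Rightarrow> nat" where
  "entry_weight y q a ent =
    (if code_hd ent = q \<and> code_hd (code_tl ent) = a
     then code_hd ((code_tl ^^ 3) ent) * 2 ^ (enc_flips y - code_hd ((code_tl ^^ 4) ent)) else 0)"

definition scan_step :: "nat \<Rightarrow> nat \<Rightarrow> nat \<Rightarrow> nat \<Rightarrow> nat \<Rightarrow> nat \<Rightarrow> nat" where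
  "scan_step y q a v i st = (let L = (code_tl ^^ i) (enc_trans y); ent = code_hd L in
     if L = 0 then st else
     if fst (prod_decode st) \<noteq> 0 then st else
     if snd (prod_decode st) \<le> v \<and> v < snd (prod_decode st) + entry_weight y q a ent
     then prod_encode (code_hd ((code_tl ^^ 2) ent) + 1, snd (prod_decode st))
     else prod_encode (0, snd (prod_decode st) + entry_weight y q a ent))"

definition scan :: "nat \<Rightarrow> nat \<Rightarrow> nat \<Rightarrow> nat \<Rightarrow> nat" where
  "scan y q a v = rec_nat (prod_encode (0, 0)) (\<lambda>i st. scan_step y q a v i st) (enc_trans y)"

definition target :: "nat \<Rightarrow> nat \<Rightarrow> nat \<Rightarrow> nat \<Rightarrow> nat" where
  "target y q a v =
    (if fst (prod_decode (scan y q a v)) \<noteq> 0 then fst (prod_decode (scan y q a v)) - 1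
     else enc_sink y)"

definition EntryWeightE :: "nexp \<Rightarrow> nexp \<Rightarrow> nexp \<Rightarrow> nexp \<Rightarrow> nexp" where
  "EntryWeightE x q a ent = If (Eq (Nth ent (Lit 0)) q) (If (Eq (Nth ent (Lit 1)) a)
   (Times (Nth ent (Lit 3)) (Pow2 (Minus (FlipsE x) (Nth ent (Lit 4))))) (Lit 0)) (Lit 0)"

lemma EntryWeightE_simps[simp]:
  "nval env (EntryWeightE x q a ent) =
    entry_weight (nval env x) (nval env q) (nval env a) (nval env ent)"
  "vars_below k (EntryWeightE x q a ent) \<longleftrightarrow>
    vars_below k x \<and> vars_below k q \<and> vars_below k a \<and> vars_below k ent"
  by (auto simp: EntryWeightE_def entry_weight_def numeral_eq_Suc cong: if_cong)

definition ScanStepE :: "nexp \<Rightarrow> nexp \<Rightarrow> nexp \<Rightarrow> nexp \<Rightarrow> nexp" where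
  "ScanStepE x q a v =
    (let L = TlPow (Var 0) (TransE (shift2 x)); ent = Hd L; st = Var 1;
         wt = EntryWeightE (shift2 x) (shift2 q) (shift2 a) ent in
     If (Eq L (Lit 0)) st
     (If (Pfst st) st
     (If (Le (Psnd st) (shift2 v))
       (If (Lt (shift2 v) (Plus (Psnd st) wt))
         (Penc (Plus (Nth ent (Lit 2)) (Lit 1)) (Psnd st))
         (Penc (Lit 0) (Plus (Psnd st) wt)))
       (Penc (Lit 0) (Plus (Psnd st) wt)))))"

lemma ScanStepE_simps[simp]:
  "nval (i # st # env) (ScanStepE x q a v) =
    scan_step (nval env x) (nval env q) (nval env a) (nval env v) i st"
  by (simp add: ScanStepE_def scan_step_def Let_def numeral_eq_Suc cong: if_cong)

lemma ScanStepE_vars_below[simp]: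
  "vars_below k x \<Longrightarrow> vars_below k q \<Longrightarrow> vars_below k a \<Longrightarrow> vars_below k v \<Longrightarrow>
    vars_below (Suc (Suc k)) (ScanStepE x q a v)"
  by (simp add: ScanStepE_def Let_def)

definition ScanE :: "nexp \<Rightarrow> nexp \<Rightarrow> nexp \<Rightarrow> nexp \<Rightarrow> nexp" where
  "ScanE x q a v = Loop (TransE x) (Penc (Lit 0) (Lit 0)) (ScanStepE x q a v)"
lemma ScanE_simps[simp]:
  "nval env (ScanE x q a v) = scan (nval env x) (nval env q) (nval env a) (nval env v)"
  "vars_below k x \<Longrightarrow> vars_below k q \<Longrightarrow> vars_below k a \<Longrightarrow> vars_below k v \<Longrightarrow>
    vars_below k (ScanE x q a v)"
  by (simp_all add: ScanE_def scan_def)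

definition TargetE :: "nexp \<Rightarrow> nexp \<Rightarrow> nexp \<Rightarrow> nexp \<Rightarrow> nexp" where
  "TargetE x q a v = If (Pfst (ScanE x q a v)) (Minus (Pfst (ScanE x q a v)) (Lit 1)) (SinkE x)"
lemma TargetE_simps[simp]:
  "nval env (TargetE x q a v) = target (nval env x) (nval env q) (nval env a) (nval env v)"
  "vars_below k x \<Longrightarrow> vars_below k q \<Longrightarrow> vars_below k a \<Longrightarrow> vars_below k v \<Longrightarrow>
    vars_below k (TargetE x q a v)"
  by (simp_all add: TargetE_def target_def)

definition tree_step :: "nat \<Rightarrow> nat \<Rightarrow> nat \<Rightarrow> nat \<Rightarrow> nat" where
  "tree_step y q a p =
    (if enc_width y \<le> p then target y q a (p - enc_width y)
     else enc_base y + ((q * enc_nletters y + a) * enc_width y + p))"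

definition TreeStepE :: "nexp \<Rightarrow> nexp \<Rightarrow> nexp \<Rightarrow> nexp \<Rightarrow> nexp" where
  "TreeStepE x q a p = If (Le (WidthE x) p) (TargetE x q a (Minus p (WidthE x)))
   (Plus (BaseE x) (Plus (Times (Plus (Times q (NLettersE x)) a) (WidthE x)) p))"
lemma TreeStepE_simps[simp]:
  "nval env (TreeStepE x q a p) = tree_step (nval env x) (nval env q) (nval env a) (nval env p)"
  "vars_below k x \<Longrightarrow> vars_below k q \<Longrightarrow> vars_below k a \<Longrightarrow> vars_below k p \<Longrightarrow>
    vars_below k (TreeStepE x q a p)"
  by (simp_all add: TreeStepE_def tree_step_def)

text \<open>Reading letter \<open>c\<close> with coin \<open>b\<close>: a state \<open>q < n\<close> reading \<open>a < m\<close> moves to node \<open>2 + b\<close> of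
  the tree of \<open>(q, a)\<close>, a node \<open>p\<close> reading the padding letter moves to \<open>2 * p + b\<close>, and once
  the node reaches \<open>P\<close> the leaf \<open>p - P\<close> selects the target. Everything else goes to the sink.\<close>

definition next_state :: "nat \<Rightarrow> nat \<Rightarrow> nat \<Rightarrow> nat \<Rightarrow> nat" where
  "next_state y s c b =
    (if s < enc_nstates y then
       (if c < enc_nletters y then tree_step y s c (2 + b) else enc_sink y)
     else if enc_base y \<le> s \<and> s < enc_sink y \<and> 2 \<le> (s - enc_base y) mod enc_width y \<and>
       c = enc_nletters y
     then tree_step y ((s - enc_base y) div enc_width y div enc_nletters y)
       ((s - enc_base y) div enc_width y mod enc_nletters y)
       (2 * ((s - enc_base y) mod enc_width y) + b)
     else enc_sink y)"

definition NextStateE :: "nexp \<Rightarrow> nexp \<Rightarrow> nexp \<Rightarrow> nexp \<Rightarrow> nexp" where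
  "NextStateE x s c b =
    (let d = Minus s (BaseE x); pp = Mod d (WidthE x); qa = Div d (WidthE x) in
     If (Lt s (NStatesE x)) (If (Lt c (NLettersE x)) (TreeStepE x s c (Plus (Lit 2) b)) (SinkE x))
     (If (Le (BaseE x) s) (If (Lt s (SinkE x)) (If (Le (Lit 2) pp) (If (Eq c (NLettersE x))
        (TreeStepE x (Div qa (NLettersE x)) (Mod qa (NLettersE x)) (Plus (Times (Lit 2) pp) b))
        (SinkE x)) (SinkE x)) (SinkE x)) (SinkE x)))"

lemma NextStateE_simps[simp]:
  "nval env (NextStateE x s c b) = next_state (nval env x) (nval env s) (nval env c) (nval env b)"
  by (simp add: NextStateE_def next_state_def Let_def cong: if_cong)

lemma NextStateE_vars_below[simp]:
  "vars_below k x \<Longrightarrow> vars_below k s \<Longrightarrow> vars_below k c \<Longrightarrow> vars_below k b \<Longrightarrow>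
    vars_below k (NextStateE x s c b)"
  by (simp add: NextStateE_def Let_def)

text \<open>The output lists, for every state \<open>s\<close>, letter \<open>c\<close> and coin \<open>b\<close>, the entry
  \<open>(s, c, next_state y s c b, 1, 1)\<close> of probability \<open>1/2\<close>.\<close>

definition out_nstates :: "nat \<Rightarrow> nat" where
  "out_nstates y = enc_sink y + 1"
definition out_nletters :: "nat \<Rightarrow> nat" where
  "out_nletters y = enc_nletters y + 1"
definition entry_src :: "nat \<Rightarrow> nat \<Rightarrow> nat" where
  "entry_src y k = k div (2 * out_nletters y)"
definition entry_letter :: "nat \<Rightarrow> nat \<Rightarrow> nat" where
  "entry_letter y k = k div 2 mod out_nletters y"
definition entry_coin :: "nat \<Rightarrow> nat" where
  "entry_coin k = k mod 2"
definition out_entry_code :: "nat \<Rightarrow> nat \<Rightarrow> nat" where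
  "out_entry_code y k = list_encode [entry_src y k, entry_letter y k,
    next_state y (entry_src y k) (entry_letter y k) (entry_coin k), 1, 1]"
definition out_trans_code :: "nat \<Rightarrow> nat" where
  "out_trans_code y =
    list_encode (rev (map (out_entry_code y) [0..<out_nstates y * out_nletters y * 2]))"
definition out_code :: "nat \<Rightarrow> nat" where
  "out_code y =
    list_encode [out_nstates y, out_nletters y, enc_init y, out_trans_code y, enc_rabin y]"

definition OutEntryE :: "nexp \<Rightarrow> nexp \<Rightarrow> nexp" where
  "OutEntryE x k =
    (let m1 = Plus (NLettersE x) (Lit 1); s = Div k (Times (Lit 2) m1);
         c = Mod (Div k (Lit 2)) m1; b = Mod k (Lit 2)
     in List5 s c (NextStateE x s c b) (Lit 1) (Lit 1))"
lemma OutEntryE_simps[simp]: "nval env (OutEntryE x k) = out_entry_code (nval env x) (nval env k)"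
  "vars_below j x \<Longrightarrow> vars_below j k \<Longrightarrow> vars_below j (OutEntryE x k)"
  by (simp_all add: OutEntryE_def out_entry_code_def Let_def entry_src_def entry_letter_def
    entry_coin_def out_nletters_def)

definition OutCodeE :: nexp where
  "OutCodeE =
    (let x = Var 0; n1 = Plus (SinkE x) (Lit 1); m1 = Plus (NLettersE x) (Lit 1)
     in List5 n1 m1 (InitE x)
          (Loop (Times (Times n1 m1) (Lit 2)) (Lit 0)
            (LCons (OutEntryE (shift2 x) (Var 0)) (Var 1)))
          (RabinE x))"

lemma rec_nat_list_encode:
  "rec_nat 0 (\<lambda>k acc. Suc (prod_encode (f k, acc))) N = list_encode (rev (map f [0..<N]))"
  by (induction N) auto

lemma OutCodeE_simps: "nval [y] OutCodeE = out_code y" "vars_below 1 OutCodeE"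
  by (simp_all add: OutCodeE_def Let_def out_code_def out_trans_code_def out_nstates_def
    out_nletters_def rec_nat_list_encode)

theorem rec_eval_out_code: "rec_eval (compile 1 OutCodeE) [y] (out_code y)"
  using rec_eval_compile[of OutCodeE y] OutCodeE_simps by simp

lemma less_list_encode: "x \<in> set xs \<Longrightarrow> x < list_encode xs"
proof (induction xs)
  case (Cons y ys)
  then show ?case
    using le_prod_encode_1[of y "list_encode ys"] le_prod_encode_2[of "list_encode ys" y] by auto
qed simp

lemma length_le_list_encode: "length xs \<le> list_encode xs"
proof (induction xs)
  case (Cons y ys)
  then show ?case using le_prod_encode_2[of "list_encode ys" y] by auto
qed simp

type_synonym trans_entry = "nat \<times> nat \<times> nat \<times> nat \<times> nat"

definition encode_entry :: "trans_entry \<Rightarrow> nat" where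
  "encode_entry = (\<lambda>(q, a, p, u, e). list_encode [q, a, p, u, e])"

definition trans_code :: "pra_code \<Rightarrow> nat" where
  "trans_code D = list_encode (map encode_entry (c_trans D))"
definition rabin_code :: "pra_code \<Rightarrow> nat" where
  "rabin_code D =
    list_encode (map (\<lambda>(al, be). prod_encode (list_encode al, list_encode be)) (c_rabin D))"

lemma encode_code_eq:
  "encode_code D = list_encode [c_nstates D, c_nletters D, c_init D, trans_code D, rabin_code D]"
  by (simp add: encode_code_def trans_code_def rabin_code_def encode_entry_def)

lemma enc_fields_encode_code[simp]:
  "enc_nstates (encode_code D) = c_nstates D"
  "enc_nletters (encode_code D) = c_nletters D"
  "enc_init (encode_code D) = c_init D"
  "enc_trans (encode_code D) = trans_code D"
  "enc_rabin (encode_code D) = rabin_code D"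
  by (simp_all add: encode_code_eq enc_nstates_def enc_nletters_def enc_init_def enc_trans_def
    enc_rabin_def numeral_eq_Suc)

definition weight :: "nat \<Rightarrow> nat \<Rightarrow> nat \<Rightarrow> trans_entry \<Rightarrow> nat" where
  "weight K q a t =
    (case t of (q', a', p', u, e) \<Rightarrow> if q' = q \<and> a' = a then u * 2 ^ (K - e) else 0)"

definition entry_target :: "trans_entry \<Rightarrow> nat" where
  "entry_target t = (case t of (q', a', p', u, e) \<Rightarrow> p')"

definition select_step ::
    "nat \<Rightarrow> nat \<Rightarrow> nat \<Rightarrow> nat \<Rightarrow> nat \<times> nat \<Rightarrow> trans_entry \<Rightarrow> nat \<times> nat" where
  "select_step K q a v st t =
    (if fst st \<noteq> 0 then st
     else if snd st \<le> v \<and> v < snd st + weight K q a t then (entry_target t + 1, snd st)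
     else (0, snd st + weight K q a t))"

lemma entry_weight_encode_entry[simp]:
  "entry_weight y q a (encode_entry t) = weight (enc_flips y) q a t"
  by (cases t) (simp add: entry_weight_def encode_entry_def weight_def numeral_eq_Suc)

lemma code_hd_tl2_encode_entry[simp]: "code_hd ((code_tl ^^ 2) (encode_entry t)) = entry_target t"
  by (cases t) (simp add: encode_entry_def entry_target_def numeral_eq_Suc)

lemma encode_entry_nonzero[simp]: "encode_entry t \<noteq> 0"
  by (cases t) (simp add: encode_entry_def)

lemma scan_step_encode_entry:
  "(code_tl ^^ i) (enc_trans y) = Suc (prod_encode (encode_entry t, rest)) \<Longrightarrow>
    scan_step y q a v i (prod_encode st) = prod_encode (select_step (enc_flips y) q a v st t)"
  by (cases st) (simp add: scan_step_def select_step_def prod_encode_inverse Let_def)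

lemma scan_foldl:
  assumes "y = encode_code D"
  shows "rec_nat (prod_encode (0, 0)) (\<lambda>i st. scan_step y q a v i st) i =
    prod_encode (foldl (select_step (enc_flips y) q a v) (0, 0) (take i (c_trans D)))"
proof (induction i)
  case 0 then show ?case by simp
next
  case (Suc i)
  have L: "(code_tl ^^ i) (enc_trans y) = list_encode (drop i (map encode_entry (c_trans D)))"
    using assms by (simp add: trans_code_def code_tl_pow_list_encode)
  show ?case
  proof (cases "i < length (c_trans D)")
    case True
    have d: "drop i (map encode_entry (c_trans D)) =
        encode_entry (c_trans D ! i) # drop (Suc i) (map encode_entry (c_trans D))"
      using True by (metis Cons_nth_drop_Suc length_map nth_map)
    have t: "take (Suc i) (c_trans D) = take i (c_trans D) @ [c_trans D ! i]"
      using True by (simp add: take_Suc_conv_app_nth)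
    have L2: "(code_tl ^^ i) (enc_trans y) = Suc (prod_encode (encode_entry (c_trans D ! i),
        list_encode (drop (Suc i) (map encode_entry (c_trans D)))))"
      using L d by simp
    show ?thesis using Suc.IH t scan_step_encode_entry[OF L2] by simp
  next
    case False
    then show ?thesis using Suc L by (simp add: scan_step_def)
  qed
qed

definition select :: "nat \<Rightarrow> nat \<Rightarrow> nat \<Rightarrow> nat \<Rightarrow> nat \<Rightarrow> trans_entry list \<Rightarrow> nat" where
  "select K q a v c ts = fst (foldl (select_step K q a v) (0, c) ts)"

lemma foldl_select_step_found: "fst st \<noteq> 0 \<Longrightarrow> foldl (select_step K q a v) st ts = st"
  by (induction ts) (auto simp: select_step_def)

lemma select_Nil[simp]: "select K q a v c [] = 0"
  by (simp add: select_def)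

lemma select_Cons: "select K q a v c (t # ts) =
   (if c \<le> v \<and> v < c + weight K q a t then entry_target t + 1
    else select K q a v (c + weight K q a t) ts)"
  by (simp add: select_def select_step_def foldl_select_step_found)

definition total_weight :: "nat \<Rightarrow> nat \<Rightarrow> nat \<Rightarrow> trans_entry list \<Rightarrow> nat" where
  "total_weight K q a ts = sum_list (map (weight K q a) ts)"

lemma select_in: "c \<le> v \<Longrightarrow> v < c + total_weight K q a ts \<Longrightarrow>
   \<exists>t\<in>set ts. weight K q a t > 0 \<and> select K q a v c ts = entry_target t + 1"
proof (induction ts arbitrary: c)
  case Nil then show ?case by (simp add: total_weight_def)
next
  case (Cons t ts)
  show ?case
  proof (cases "v < c + weight K q a t")
    case True then show ?thesis using Cons.prems by (auto simp: select_Cons)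
  next
    case False
    then have "\<exists>t'\<in>set ts. weight K q a t' > 0 \<and>
        select K q a v (c + weight K q a t) ts = entry_target t' + 1"
      using Cons.prems by (intro Cons.IH) (auto simp: total_weight_def)
    then show ?thesis using False by (auto simp: select_Cons)
  qed
qed

lemma card_select_eq:
  "card {v. c \<le> v \<and> v < c + total_weight K q a ts \<and> select K q a v c ts = Suc p} =
    sum_list (map (\<lambda>t. if entry_target t = p then weight K q a t else 0) ts)"
proof (induction ts arbitrary: c)
  case Nil then show ?case by (simp add: total_weight_def)
next
  case (Cons t ts)
  let ?w = "weight K q a t"
  have split:
    "{v. c \<le> v \<and> v < c + total_weight K q a (t # ts) \<and> select K q a v c (t # ts) = Suc p} =
     {v. c \<le> v \<and> v < c + ?w \<and> entry_target t = p} \<union>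
     {v. c + ?w \<le> v \<and> v < c + ?w + total_weight K q a ts \<and> select K q a v (c + ?w) ts = Suc p}"
    by (auto simp: select_Cons total_weight_def)
  have "card (\<dots>) = card {v. c \<le> v \<and> v < c + ?w \<and> entry_target t = p} +
     card {v. c + ?w \<le> v \<and> v < c + ?w + total_weight K q a ts \<and> select K q a v (c + ?w) ts = Suc p}"
    by (rule card_Un_disjoint) auto
  moreover have "card {v. c \<le> v \<and> v < c + ?w \<and> entry_target t = p} =
    (if entry_target t = p then ?w else 0)"
  proof -
    have "{v. c \<le> v \<and> v < c + ?w} = {c..<c + ?w}" by auto
    then show ?thesis by auto
  qed
  ultimately show ?case using Cons.IH[of "c + ?w"] split by simp
qed

lemma target_select:
  assumes "y = encode_code D"
  shows "target y q a v =
    (if select (enc_flips y) q a v 0 (c_trans D) \<noteq> 0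
     then select (enc_flips y) q a v 0 (c_trans D) - 1 else enc_sink y)"
proof -
  have "length (c_trans D) \<le> enc_trans y"
    using assms length_le_list_encode[of "map encode_entry (c_trans D)"]
    by (simp add: trans_code_def)
  then have "scan y q a v =
      prod_encode (foldl (select_step (enc_flips y) q a v) (0, 0) (c_trans D))"
    using scan_foldl[OF assms, of q a v "enc_trans y"] by (simp add: scan_def)
  then show ?thesis by (simp add: target_def select_def prod_encode_inverse)
qed

definition entry_exp :: "trans_entry \<Rightarrow> nat" where
  "entry_exp t = (case t of (q', a', p', u, e) \<Rightarrow> e)"

lemma entry_exp_less:
  assumes "t \<in> set (c_trans D)"
  shows "entry_exp t < enc_flips (encode_code D)"
proof -
  obtain q a p u e where t: "t = (q, a, p, u, e)" by (cases t) auto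
  have "encode_entry t \<in> set (map encode_entry (c_trans D))" using assms by simp
  then have "encode_entry t < trans_code D" unfolding trans_code_def by (rule less_list_encode)
  moreover have "e < list_encode [q, a, p, u, e]" by (rule less_list_encode) simp
  then have "e < encode_entry t" by (simp add: t encode_entry_def)
  ultimately show ?thesis by (simp add: enc_flips_def t entry_exp_def)
qed

definition trans_list :: "trans_entry list \<Rightarrow> nat \<Rightarrow> nat \<Rightarrow> nat \<Rightarrow> real" where
  "trans_list ts q a p =
    (\<Sum>(q', a', p', u, e) \<leftarrow> ts. if (q', a', p') = (q, a, p) then real u / 2 ^ e else 0)"

lemma trans_aut_of: "trans (aut_of D) = trans_list (c_trans D)"
  by (simp add: aut_of_def trans_list_def fun_eq_iff)

lemma trans_list_weight:
  assumes "\<forall>t\<in>set ts. entry_exp t \<le> K"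
  shows "real (\<Sum>t\<leftarrow>ts. if entry_target t = p then weight K q a t else 0) =
    2 ^ K * trans_list ts q a p"
  using assms
proof (induction ts)
  case Nil then show ?case by (simp add: trans_list_def)
next
  case (Cons t ts)
  obtain q' a' p' u e where t: "t = (q', a', p', u, e)" by (cases t) auto
  have e: "e \<le> K" using Cons.prems t by (simp add: entry_exp_def)
  have "real (u * 2 ^ (K - e)) = real u * (2::real) ^ (K - e)" by simp
  also have "\<dots> = real u * (2 ^ K / 2 ^ e)" using e by (simp add: power_diff)
  also have "\<dots> = 2 ^ K * (real u / 2 ^ e)" by simp
  finally have "real (u * 2 ^ (K - e)) = 2 ^ K * (real u / 2 ^ e)" .
  then show ?case
    using Cons by (auto simp: t trans_list_def entry_target_def weight_def algebra_simps)
qed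

lemma trans_list_nonneg: "trans_list ts q a p \<ge> 0"
  unfolding trans_list_def by (induction ts) auto

lemma trans_list_ge_entry: "t \<in> set ts \<Longrightarrow> t = (q, a, p, u, e) \<Longrightarrow> trans_list ts q a p \<ge> real u / 2 ^ e"
proof (induction ts)
  case (Cons t' ts)
  show ?case
  proof (cases "t' = t")
    case True
    have "trans_list ts q a p \<ge> 0" by (rule trans_list_nonneg)
    then show ?thesis using True Cons.prems by (simp add: trans_list_def)
  next
    case False
    then have "trans_list ts q a p \<ge> real u / 2 ^ e" using Cons by auto
    moreover obtain q' a' p' u' e' where t': "t' = (q', a', p', u', e')" by (cases t') auto
    ultimately show ?thesis by (auto simp: trans_list_def t' intro!: add_increasing)
  qed
qed simp

lemma trans_list_rev: "trans_list (rev ts) q a p = trans_list ts q a p"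
  unfolding trans_list_def by (simp only: rev_map[symmetric] sum_list_rev)

lemma sum_list_sum_swap: "(\<Sum>t\<leftarrow>ts. \<Sum>p\<in>A. f t p) = (\<Sum>p\<in>A. \<Sum>t\<leftarrow>ts. f t p)"
  by (induction ts) (simp_all add: sum.distrib)

definition node_state :: "nat \<Rightarrow> nat \<Rightarrow> nat \<Rightarrow> nat \<Rightarrow> nat" where
  "node_state y q a p = enc_base y + ((q * enc_nletters y + a) * enc_width y + p)"

definition out_entry :: "nat \<Rightarrow> nat \<Rightarrow> trans_entry" where
  "out_entry y k = (entry_src y k, entry_letter y k,
    next_state y (entry_src y k) (entry_letter y k) (entry_coin k), 1, 1)"

definition simple_code :: "pra_code \<Rightarrow> pra_code" where
  "simple_code D = (let y = encode_code D in
     PraCode (out_nstates y) (out_nletters y) (c_init D)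
       (rev (map (out_entry y) [0..<out_nstates y * out_nletters y * 2])) (c_rabin D))"

lemma encode_simple_code: "encode_code (simple_code D) = out_code (encode_code D)"
proof -
  define y where "y = encode_code D"
  have c: "simple_code D = PraCode (out_nstates y) (out_nletters y) (c_init D)
    (rev (map (out_entry y) [0..<out_nstates y * out_nletters y * 2])) (c_rabin D)"
    by (simp add: simple_code_def y_def Let_def)
  have "map encode_entry (rev (map (out_entry y) L)) = rev (map (out_entry_code y) L)" for L
    by (simp add: rev_map out_entry_def out_entry_code_def encode_entry_def)
  then have t: "trans_code (simple_code D) = out_trans_code y"
    by (simp add: c trans_code_def out_trans_code_def)
  have r: "rabin_code (simple_code D) = rabin_code D" by (simp add: c rabin_code_def)
  have "encode_code (simple_code D) =
      list_encode [out_nstates y, out_nletters y, c_init D, out_trans_code y, rabin_code D]"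
    unfolding encode_code_eq t r by (simp add: c)
  also have "\<dots> = out_code y" by (simp add: out_code_def y_def)
  finally show ?thesis by (simp add: y_def)
qed

lemma rec_eval_simple_code:
  "rec_eval (compile 1 OutCodeE) [encode_code D] (encode_code (simple_code D))"
  using rec_eval_out_code[of "encode_code D"] by (simp add: encode_simple_code)

section \<open>The constructed automaton\<close>

locale wf_code =
  fixes D :: pra_code
  assumes wf: "wf_pra (aut_of D)"
begin

abbreviation "y \<equiv> encode_code D"
abbreviation "n \<equiv> c_nstates D"
abbreviation "m \<equiv> c_nletters D"
abbreviation "K \<equiv> enc_flips y"
abbreviation "Ts \<equiv> c_trans D"
abbreviation "A \<equiv> aut_of D"
abbreviation "A' \<equiv> aut_of (simple_code D)"

lemma entry_exp_le_flips: "t \<in> set Ts \<Longrightarrow> entry_exp t \<le> K"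
  using entry_exp_less[of t D] by simp

lemma sum_weight_eq_trans:
  "real (\<Sum>t\<leftarrow>Ts. if entry_target t = p then weight K q a t else 0) = 2 ^ K * trans A q a p"
  using trans_list_weight[of Ts K p q a] entry_exp_le_flips by (simp add: trans_aut_of)

lemma trans_wf:
  "q < n \<Longrightarrow> a < m \<Longrightarrow>
    (\<forall>p. trans A q a p \<ge> 0 \<and> (p \<ge> n \<longrightarrow> trans A q a p = 0)) \<and> (\<Sum>p<n. trans A q a p) = 1"
  using wf by (auto simp: wf_pra_def aut_of_def)

lemma init_less: "c_init D < n"
  using wf by (simp add: wf_pra_def aut_of_def)

lemma weight_pos_target_less:
  assumes "q < n" "a < m" "t \<in> set Ts" "weight K q a t > 0"
  shows "entry_target t < n"
proof (rule ccontr)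
  assume c: "\<not> entry_target t < n"
  obtain q' a' p' u e where t: "t = (q', a', p', u, e)" by (cases t) auto
  have m: "q' = q" "a' = a" "u > 0" using assms(4) by (auto simp: t weight_def split: if_splits)
  have "trans_list Ts q a p' \<ge> real u / 2 ^ e" using trans_list_ge_entry[OF assms(3)] t m by simp
  moreover have "real u / 2 ^ e > 0" using m by simp
  moreover have "trans A q a p' = 0" using trans_wf[OF assms(1,2)] c
    by (simp add: t entry_target_def)
  ultimately show False by (simp add: trans_aut_of)
qed

lemma total_weight_eq:
  assumes "q < n" "a < m"
  shows "total_weight K q a Ts = 2 ^ K"
proof -
  have "(\<Sum>t\<leftarrow>Ts. weight K q a t) =
      (\<Sum>t\<leftarrow>Ts. \<Sum>p<n. if entry_target t = p then weight K q a t else 0)"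
  proof (rule arg_cong[where f = sum_list], rule map_cong[OF refl])
    fix t assume t: "t \<in> set Ts"
    show "weight K q a t = (\<Sum>p<n. if entry_target t = p then weight K q a t else 0)"
    proof (cases "weight K q a t > 0")
      case True
      then have "entry_target t < n" using weight_pos_target_less assms t by blast
      then show ?thesis by (simp add: sum.delta)
    next
      case False then show ?thesis by simp
    qed
  qed
  also have "\<dots> = (\<Sum>p<n. \<Sum>t\<leftarrow>Ts. if entry_target t = p then weight K q a t else 0)"
    by (rule sum_list_sum_swap)
  finally have "real (total_weight K q a Ts) =
    (\<Sum>p<n. real (\<Sum>t\<leftarrow>Ts. if entry_target t = p then weight K q a t else 0))"
    by (simp add: total_weight_def)
  also have "\<dots> = (\<Sum>p<n. 2 ^ K * trans A q a p)" using sum_weight_eq_trans by simp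
  also have "\<dots> = 2 ^ K" using trans_wf[OF assms] by (simp add: sum_distrib_left[symmetric])
  finally show ?thesis by (metis of_nat_eq_iff of_nat_numeral of_nat_power)
qed

lemma target_less:
  assumes "q < n" "a < m" "v < 2 ^ K"
  shows "target y q a v < n"
proof -
  obtain t where t: "t \<in> set Ts" "weight K q a t > 0" "select K q a v 0 Ts = entry_target t + 1"
    using select_in[of 0 v K q a Ts] total_weight_eq[OF assms(1,2)] assms(3) by auto
  then show ?thesis
    using target_select[of y D q a v] weight_pos_target_less[OF assms(1,2) t(1,2)] by simp
qed

lemma card_target_eq:
  assumes "q < n" "a < m" "p < n"
  shows "real (card {v. v < 2 ^ K \<and> target y q a v = p}) = 2 ^ K * trans A q a p"
proof -
  have "{v. v < 2 ^ K \<and> target y q a v = p} =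
      {v. 0 \<le> v \<and> v < 0 + total_weight K q a Ts \<and> select K q a v 0 Ts = Suc p}"
  proof (intro set_eqI iffI)
    fix v assume v: "v \<in> {v. v < 2 ^ K \<and> target y q a v = p}"
    obtain t where t: "t \<in> set Ts" "weight K q a t > 0" "select K q a v 0 Ts = entry_target t + 1"
      using select_in[of 0 v K q a Ts] total_weight_eq[OF assms(1,2)] v by auto
    then show "v \<in> {v. 0 \<le> v \<and> v < 0 + total_weight K q a Ts \<and> select K q a v 0 Ts = Suc p}"
      using v target_select[of y D q a v] total_weight_eq[OF assms(1,2)] by auto
  next
    fix v assume v: "v \<in> {v. 0 \<le> v \<and> v < 0 + total_weight K q a Ts \<and> select K q a v 0 Ts = Suc p}"
    then show "v \<in> {v. v < 2 ^ K \<and> target y q a v = p}"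
      using target_select[of y D q a v] total_weight_eq[OF assms(1,2)] by auto
  qed
  then show ?thesis using card_select_eq[of 0 K q a Ts p] sum_weight_eq_trans by simp
qed

abbreviation "P \<equiv> enc_width y"
abbreviation "B \<equiv> enc_base y"
abbreviation "S \<equiv> enc_sink y"
abbreviation "node \<equiv> node_state y"

lemma K_pos: "K \<ge> 1" by (simp add: enc_flips_def)
lemma P_eq: "P = 2 ^ K" by (simp add: enc_width_def)
lemma P_ge2: "P \<ge> 2"
proof -
  have "(2::nat) ^ 1 \<le> 2 ^ K" using K_pos by (intro power_increasing) auto
  then show ?thesis by (simp add: P_eq)
qed

lemma B_eq: "B = n + rabin_code D" by (simp add: enc_base_def)
lemma S_eq: "S = B + n * m * P" by (simp add: enc_sink_def)

lemma node_bounds: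
  assumes "q < n" "a < m" "p < P"
  shows "B \<le> node q a p" "node q a p < S"
proof -
  show "B \<le> node q a p" by (simp add: node_state_def)
  have "q * m + a < n * m"
  proof -
    have "q * m + a < q * m + m" using assms by simp
    also have "\<dots> = (q + 1) * m" by simp
    also have "\<dots> \<le> n * m" using assms by (intro mult_right_mono) auto
    finally show ?thesis .
  qed
  then have "q * m + a + 1 \<le> n * m" by simp
  then have "(q * m + a + 1) * P \<le> n * m * P" by (rule mult_right_mono) simp
  then have "(q * m + a) * P + p < n * m * P" using assms(3) by (simp add: algebra_simps)
  then show "node q a p < S" by (simp add: node_state_def S_eq)
qed

lemma next_state_orig_letter: "q < n \<Longrightarrow> a < m \<Longrightarrow> next_state y q a b = tree_step y q a (2 + b)"
  by (simp add: next_state_def)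

lemma next_state_orig_padding: "q < n \<Longrightarrow> \<not> c < m \<Longrightarrow> next_state y q c b = S"
  by (simp add: next_state_def)

lemma tree_step_eq: "tree_step y q a p = (if P \<le> p then target y q a (p - P) else node q a p)"
  by (simp add: tree_step_def node_state_def)

lemma node_decode:
  assumes "q < n" "a < m" "p < P"
  shows "(node q a p - B) mod P = p" "(node q a p - B) div P div m = q"
    "(node q a p - B) div P mod m = a"
proof -
  have d: "node q a p - B = (q * m + a) * P + p" by (simp add: node_state_def)
  show "(node q a p - B) mod P = p" using assms by (simp add: d)
  have "(node q a p - B) div P = q * m + a" using assms by (simp add: d)
  then show "(node q a p - B) div P div m = q" "(node q a p - B) div P mod m = a"
    using assms by auto
qed

lemma nstates_le_base: "n \<le> B" by (simp add: B_eq)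

lemma next_state_node_padding:
  assumes "q < n" "a < m" "2 \<le> p" "p < P"
  shows "next_state y (node q a p) m b = tree_step y q a (2 * p + b)"
  using node_bounds[OF assms(1,2,4)] node_decode[OF assms(1,2,4)] assms nstates_le_base
  unfolding next_state_def by auto

lemma next_state_node_letter:
  assumes "q < n" "a < m" "p < P" "c \<noteq> m"
  shows "next_state y (node q a p) c b = S"
  using node_bounds[OF assms(1,2,3)] assms nstates_le_base unfolding next_state_def by auto

lemma next_state_sink: "next_state y S c b = S"
  using nstates_le_base by (simp add: next_state_def S_eq)

lemma tree_step_le_sink:
  assumes "q < n" "a < m" "p < 2 * P"
  shows "tree_step y q a p \<le> S"
proof (cases "P \<le> p")
  case True
  then have "target y q a (p - P) < n" using assms by (intro target_less) (auto simp: P_eq)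
  then show ?thesis using True nstates_le_base by (simp add: tree_step_eq S_eq)
next
  case False
  then show ?thesis using node_bounds[OF assms(1,2), of p] by (simp add: tree_step_eq)
qed

lemma next_state_le_sink:
  assumes "s \<le> S" "b \<le> 1"
  shows "next_state y s c b \<le> S"
proof (cases "s < n")
  case True
  then show ?thesis using tree_step_le_sink[of s c "2 + b"] assms P_ge2
    by (auto simp: next_state_def)
next
  case False
  show ?thesis
  proof (cases "B \<le> s \<and> s < S \<and> 2 \<le> (s - B) mod P \<and> c = m")
    case True
    then have "0 < n * m * P" "s - B < n * m * P" using S_eq by linarith+
    then have "(s - B) div P < n * m" "m > 0" by (simp_all add: less_mult_imp_div_less)
    then have "(s - B) div P div m < n" "(s - B) div P mod m < m"
      by (simp_all add: div_less_iff_less_mult mult.commute)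
    moreover have "(s - B) mod P < P" using P_ge2 by simp
    then have "2 * ((s - B) mod P) + b < 2 * P" using assms by simp
    ultimately show ?thesis using True False tree_step_le_sink by (simp add: next_state_def)
  next
    case c: False
    have "next_state y s c b = S"
      unfolding next_state_def enc_fields_encode_code using False c
      by (simp only: if_False if_not_P)
    then show ?thesis by simp
  qed
qed

lemma out_nletters_eq: "out_nletters y = m + 1" by (simp add: out_nletters_def)
lemma out_nstates_eq: "out_nstates y = S + 1" by (simp add: out_nstates_def)

lemma entry_index_iff:
  assumes "c < out_nletters y"
  shows "(entry_src y k = s \<and> entry_letter y k = c) \<longleftrightarrow> k div 2 = s * out_nletters y + c"
proof -
  have d: "k div (2 * out_nletters y) = k div 2 div out_nletters y" by (simp add: div_mult2_eq)
  show ?thesis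
  proof
    assume "entry_src y k = s \<and> entry_letter y k = c"
    then have "k div 2 div out_nletters y = s" "k div 2 mod out_nletters y = c" using d
      by (auto simp: entry_src_def entry_letter_def)
    then show "k div 2 = s * out_nletters y + c" by (metis div_mult_mod_eq)
  next
    assume "k div 2 = s * out_nletters y + c"
    then have "k div 2 div out_nletters y = s" "k div 2 mod out_nletters y = c"
      using assms by simp_all
    then show "entry_src y k = s \<and> entry_letter y k = c" using d
      by (simp add: entry_src_def entry_letter_def)
  qed
qed

lemma trans_simple_code:
  assumes "s < out_nstates y" "c < out_nletters y"
  shows "trans A' s c t =
    (if next_state y s c 0 = t then 1/2 else 0) + (if next_state y s c 1 = t then 1/2 else 0)"
proof -
  let ?N = "out_nstates y * out_nletters y * 2"
  let ?f = "\<lambda>k. if (entry_src y k, entry_letter y k,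
      next_state y (entry_src y k) (entry_letter y k) (entry_coin k)) = (s, c, t)
    then (1::real) / 2 else 0"
  let ?k0 = "2 * (s * out_nletters y + c)"
  have tr: "trans A' s c t = (\<Sum>k\<leftarrow>[0..<?N]. ?f k)"
  proof -
    have ct: "c_trans (simple_code D) = rev (map (out_entry y) [0..<?N])"
      by (simp add: simple_code_def Let_def)
    have "trans_list (map (out_entry y) L) s c t = (\<Sum>k\<leftarrow>L. ?f k)" for L
      by (simp add: trans_list_def out_entry_def comp_def cong: if_cong)
    then show ?thesis unfolding trans_aut_of ct trans_list_rev by blast
  qed
  also have "\<dots> = (\<Sum>k\<in>{0..<?N}. ?f k)" using sum_set_upt_conv_sum_list_nat[of ?f 0 ?N] by simp
  also have "\<dots> = (\<Sum>k\<in>{?k0, Suc ?k0}. ?f k)"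
  proof (rule sum.mono_neutral_right)
    have "s * out_nletters y + c < out_nstates y * out_nletters y"
    proof -
      have "s * out_nletters y + c < s * out_nletters y + out_nletters y" using assms by simp
      also have "\<dots> = (s + 1) * out_nletters y" by simp
      also have "\<dots> \<le> out_nstates y * out_nletters y" using assms by (intro mult_right_mono) auto
      finally show ?thesis .
    qed
    then show "{?k0, Suc ?k0} \<subseteq> {0..<?N}" by auto
    show "\<forall>k\<in>{0..<?N} - {?k0, Suc ?k0}. ?f k = 0"
    proof
      fix k assume k: "k \<in> {0..<?N} - {?k0, Suc ?k0}"
      have "k div 2 \<noteq> s * out_nletters y + c" using k by auto
      then show "?f k = 0" using entry_index_iff[OF assms(2)] by auto
    qed
  qed simp
  also have "\<dots> = ?f ?k0 + ?f (Suc ?k0)" by simp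
  also have "\<dots> = (if next_state y s c 0 = t then 1/2 else 0) +
    (if next_state y s c 1 = t then 1/2 else 0)"
  proof -
    have "?k0 div 2 = s * out_nletters y + c" "Suc ?k0 div 2 = s * out_nletters y + c" by simp_all
    then have "entry_src y ?k0 = s \<and> entry_letter y ?k0 = c"
      "entry_src y (Suc ?k0) = s \<and> entry_letter y (Suc ?k0) = c"
      using entry_index_iff[OF assms(2)] by blast+
    moreover have "entry_coin ?k0 = 0" "entry_coin (Suc ?k0) = 1" by (simp_all add: entry_coin_def)
    ultimately show ?thesis by simp
  qed
  finally show ?thesis .
qed

lemma states_simple_code[simp]: "states A' = {..<S + 1}"
  by (simp add: aut_of_def simple_code_def Let_def out_nstates_def)
lemma alphabet_simple_code[simp]: "alphabet A' = {..<m + 1}"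
  by (simp add: aut_of_def simple_code_def Let_def out_nletters_def)
lemma initial_simple_code[simp]: "initial A' = c_init D"
  by (simp add: aut_of_def simple_code_def Let_def)
lemma pairs_simple_code[simp]: "pairs A' = pairs A"
  by (simp add: aut_of_def simple_code_def Let_def)

lemma wf_simple_code: "wf_pra A'"
proof -
  have g: "next_state y s c b < S + 1" if "s < S + 1" "b \<le> 1" for s c b
    using next_state_le_sink[of s b c] that by simp
  show ?thesis
    unfolding wf_pra_def
  proof (intro conjI ballI allI impI)
    show "finite (states A')" by simp
    show "finite (alphabet A')" by simp
    show "initial A' \<in> states A'"
      using init_less nstates_le_base by (simp add: S_eq)
  next
    fix q a p assume q: "q \<in> states A'" and a: "a \<in> alphabet A'"
    then have qa: "q < out_nstates y" "a < out_nletters y"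
      by (auto simp: out_nstates_eq out_nletters_eq)
    show "trans A' q a p \<ge> 0" using trans_simple_code[OF qa] by simp
  next
    fix q a p assume q: "q \<in> states A'" and a: "a \<in> alphabet A'"
      and p: "p \<notin> states A'"
    then have qa: "q < out_nstates y" "a < out_nletters y"
      by (auto simp: out_nstates_eq out_nletters_eq)
    have "next_state y q a 0 \<noteq> p" "next_state y q a 1 \<noteq> p" using g[of q 0 a] g[of q 1 a] q p by auto
    then show "trans A' q a p = 0" by (simp add: trans_simple_code[OF qa])
  next
    fix q a assume q: "q \<in> states A'" and a: "a \<in> alphabet A'"
    then have qa: "q < out_nstates y" "a < out_nletters y"
      by (auto simp: out_nstates_eq out_nletters_eq)
    have "(\<Sum>p\<in>states A'. trans A' q a p) =
      (\<Sum>p<S+1. (if next_state y q a 0 = p then 1/2 else 0) +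
        (if next_state y q a 1 = p then 1/2 else 0))"
      unfolding states_simple_code by (rule sum.cong[OF refl]) (simp add: trans_simple_code[OF qa])
    also have "\<dots> = (\<Sum>p<S+1. (if next_state y q a 0 = p then 1/2 else 0)) +
      (\<Sum>p<S+1. (if next_state y q a 1 = p then 1/2 else 0))"
      by (rule sum.distrib)
    also have "\<dots> = 1/2 + 1/2" using g[of q 0 a] g[of q 1 a] q
      by (simp only: sum.delta' finite_lessThan) simp
    also have "\<dots> = (1::real)" by simp
    finally show "(\<Sum>p\<in>states A'. trans A' q a p) = 1" .
  qed
qed

lemma simple_pra_simple_code: "simple_pra A'"
  unfolding simple_pra_def
proof (intro ballI)
  fix q a p assume q: "q \<in> states A'" and a: "a \<in> alphabet A'"
  then have qa: "q < out_nstates y" "a < out_nletters y"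
    by (auto simp: out_nstates_eq out_nletters_eq)
  show "trans A' q a p \<in> {0, 1/2, 1}" unfolding trans_simple_code[OF qa]
    by (cases "next_state y q a 0 = p"; cases "next_state y q a 1 = p") simp_all
qed

end

section \<open>Simulation\<close>

context wf_code
begin

definition coin_step :: "nat \<Rightarrow> nat \<Rightarrow> bool \<Rightarrow> nat" where
  "coin_step q a b = next_state y q a (of_bool b)"

definition block_step :: "nat \<Rightarrow> nat \<Rightarrow> (nat \<Rightarrow> bool) \<Rightarrow> nat" where
  "block_step q a f = target y q a (bits_val K f)"

definition pad :: "(nat \<Rightarrow> nat) \<Rightarrow> nat \<Rightarrow> nat" where
  "pad w t = (if t mod K = 0 then w (t div K) else m)"

text \<open>Node \<open>p\<close> of the decision tree of \<open>(q, a)\<close>; the root \<open>1\<close> is the state \<open>q\<close> itself.\<close>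

definition tree_pos :: "nat \<Rightarrow> nat \<Rightarrow> nat \<Rightarrow> nat" where
  "tree_pos q a p = (if p = 1 then q else node q a p)"

abbreviation "padded_run w \<omega> \<equiv> sampled_run A' coin_step (pad w) (unblock K \<omega>)"
abbreviation "block_run w \<omega> \<equiv> sampled_run A block_step w \<omega>"

lemma K_gt0: "K > 0"
  using K_pos by simp

lemma pow_le_P: "j \<le> K \<Longrightarrow> (2::nat) ^ j \<le> P"
  by (simp add: P_eq power_increasing)

lemma pad_block: "j < K \<Longrightarrow> pad w (i * K + j) = (if j = 0 then w i else m)"
  using K_gt0 by (simp add: pad_def)

lemma unblock_block: "j < K \<Longrightarrow> unblock K \<omega> (i * K + j) = \<omega> i j"
  by (simp add: unblock_def)

lemma tree_node_bounds: "2 ^ j \<le> 2 ^ j + bits_val j f" "2 ^ j + bits_val j f < 2 ^ Suc j"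
  using bits_val_less[of j f] by simp_all

lemma tree_node_eq_1_iff: "2 ^ j + bits_val j f = 1 \<longleftrightarrow> j = 0" "2 ^ j + bits_val j f = Suc 0 \<longleftrightarrow> j = 0"
proof -
  have "2 \<le> (2::nat) ^ j" if "j \<noteq> 0" using that power_increasing[of 1 j "2::nat"] by simp
  then show "2 ^ j + bits_val j f = 1 \<longleftrightarrow> j = 0" "2 ^ j + bits_val j f = Suc 0 \<longleftrightarrow> j = 0"
    by (cases "j = 0"; simp)+
qed

lemma next_state_tree_pos:
  assumes "q < n" "a < m" "1 \<le> p" "p < P"
  shows "next_state y (tree_pos q a p) (if p = 1 then a else m) b = tree_step y q a (2 * p + b)"
  using next_state_orig_letter[OF assms(1,2)] next_state_node_padding[OF assms(1,2) _ assms(4)]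
    assms(3)
  by (cases "p = 1") (simp_all add: tree_pos_def)

lemma block_run_less:
  assumes w: "\<forall>i. w i < m"
  shows "block_run w \<omega> i < n"
proof (induction i)
  case 0 then show ?case using init_less by (simp add: aut_of_def)
next
  case (Suc i)
  then show ?case
    using target_less[OF Suc w[rule_format, of i] bits_val_less[of K "\<omega> i"]]
    by (simp add: block_step_def)
qed

lemma padded_run_within_block:
  assumes w: "\<forall>i. w i < m" and start: "padded_run w \<omega> (i * K) = block_run w \<omega> i" and "j < K"
  shows "padded_run w \<omega> (i * K + j) = tree_pos (block_run w \<omega> i) (w i) (2 ^ j + bits_val j (\<omega> i))"
  using \<open>j < K\<close>
proof (induction j)
  case 0 then show ?case using start by (simp add: tree_pos_def)
next
  case (Suc j)
  let ?p = "2 ^ j + bits_val j (\<omega> i)"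
  have p: "1 \<le> ?p" "?p < P" "2 ^ Suc j + bits_val (Suc j) (\<omega> i) < P"
    using tree_node_bounds[of j "\<omega> i"] tree_node_bounds[of "Suc j" "\<omega> i"] pow_le_P[of "Suc (Suc j)"]
      pow_le_P[of "Suc j"] Suc.prems by simp_all
  have j: "j < K" using Suc.prems by simp
  have "padded_run w \<omega> (i * K + Suc j) =
      coin_step (padded_run w \<omega> (i * K + j)) (pad w (i * K + j)) (unblock K \<omega> (i * K + j))"
    by simp
  also have "\<dots> = next_state y (tree_pos (block_run w \<omega> i) (w i) ?p) (if ?p = 1 then w i else m)
      (of_bool (\<omega> i j))"
    by (simp only: Suc.IH[OF j] pad_block[OF j] unblock_block[OF j] tree_node_eq_1_iff
      coin_step_def)
  also have "\<dots> = tree_step y (block_run w \<omega> i) (w i) (2 ^ Suc j + bits_val (Suc j) (\<omega> i))"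
    using next_state_tree_pos[OF block_run_less[OF w] w[rule_format] p(1,2)] by simp
  also have "\<dots> = tree_pos (block_run w \<omega> i) (w i) (2 ^ Suc j + bits_val (Suc j) (\<omega> i))"
    using p(3) tree_node_eq_1_iff(1)[of "Suc j" "\<omega> i"] by (simp add: tree_step_eq tree_pos_def)
  finally show ?case .
qed

lemma padded_run_block_start:
  assumes w: "\<forall>i. w i < m"
  shows "padded_run w \<omega> (i * K) = block_run w \<omega> i"
proof (induction i)
  case 0 then show ?case by (simp add: aut_of_def simple_code_def Let_def)
next
  case (Suc i)
  define j where "j = K - 1"
  have K: "K = Suc j" using K_gt0 by (simp add: j_def)
  let ?p = "2 ^ j + bits_val j (\<omega> i)"
  have p: "1 \<le> ?p" "?p < P" "P \<le> 2 * ?p + of_bool (\<omega> i j)"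
    using tree_node_bounds[of j "\<omega> i"] by (simp_all add: P_eq K)
  have j: "j < K" using K by simp
  have "Suc i * K = Suc (i * K + j)" using K by simp
  then have "padded_run w \<omega> (Suc i * K) =
      coin_step (padded_run w \<omega> (i * K + j)) (pad w (i * K + j)) (unblock K \<omega> (i * K + j))"
    by (simp only: sampled_run_simps)
  also have "\<dots> = next_state y (tree_pos (block_run w \<omega> i) (w i) ?p) (if ?p = 1 then w i else m)
      (of_bool (\<omega> i j))"
    by (simp only: padded_run_within_block[OF w Suc j] pad_block[OF j] unblock_block[OF j]
        tree_node_eq_1_iff coin_step_def)
  also have "\<dots> = tree_step y (block_run w \<omega> i) (w i) (2 * ?p + of_bool (\<omega> i j))"
    using next_state_tree_pos[OF block_run_less[OF w] w[rule_format] p(1,2)] by simp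
  also have "\<dots> = block_run w \<omega> (Suc i)"
    using p(3) by (simp add: tree_step_eq block_step_def P_eq K)
  finally show ?case .
qed

lemma padded_run_block:
  assumes "\<forall>i. w i < m" "j < K"
  shows "padded_run w \<omega> (i * K + j) = tree_pos (block_run w \<omega> i) (w i) (2 ^ j + bits_val j (\<omega> i))"
  using padded_run_within_block[OF assms(1) padded_run_block_start[OF assms(1)] assms(2)] .

lemma rabin_state_less_base:
  assumes "(\<alpha>, \<beta>) \<in> set (pairs A)" "q \<in> \<alpha> \<union> \<beta>"
  shows "q < B"
proof -
  obtain al be where ab: "(al, be) \<in> set (c_rabin D)" "\<alpha> = set al" "\<beta> = set be"
    using assms(1) by (auto simp: aut_of_def)
  have "q < list_encode al \<or> q < list_encode be" using assms(2) ab less_list_encode by auto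
  then have "q < prod_encode (list_encode al, list_encode be)"
    using le_prod_encode_1[of "list_encode al" "list_encode be"] le_prod_encode_2[of
      "list_encode be" "list_encode al"]
    by auto
  also have "\<dots> < rabin_code D" unfolding rabin_code_def by (rule less_list_encode) (use ab in force)
  finally show ?thesis by (simp add: B_eq)
qed

lemma infm_iff_blocks:
  fixes r' r :: "nat \<Rightarrow> nat"
  assumes "\<And>t. r' t = q \<longleftrightarrow> (t mod K = 0 \<and> r (t div K) = q)"
  shows "(\<exists>\<^sub>\<infinity>t. r' t = q) \<longleftrightarrow> (\<exists>\<^sub>\<infinity>i. r i = q)"
proof -
  have "{t. r' t = q} = (\<lambda>i. i * K) ` {i. r i = q}"
  proof (intro set_eqI iffI)
    fix t assume "t \<in> {t. r' t = q}"
    then have "t mod K = 0" "r (t div K) = q" using assms by auto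
    then show "t \<in> (\<lambda>i. i * K) ` {i. r i = q}"
      by (intro image_eqI[where x = "t div K"]) (auto simp: mult.commute)
  next
    fix t assume "t \<in> (\<lambda>i. i * K) ` {i. r i = q}"
    then obtain i where "t = i * K" "r i = q" by auto
    then show "t \<in> {t. r' t = q}" using assms K_gt0 by simp
  qed
  moreover have "inj_on (\<lambda>i::nat. i * K) {i. r i = q}" using K_gt0 by (auto simp: inj_on_def)
  then have "finite ((\<lambda>i. i * K) ` {i. r i = q}) \<longleftrightarrow> finite {i. r i = q}"
    by (rule finite_image_iff)
  ultimately show ?thesis by (simp add: frequently_cofinite)
qed

text \<open>The padded run visits the states below \<open>B\<close> exactly at block boundaries, and there it agrees
  with the block run.\<close>

lemma accepting_padded_iff:
  assumes w: "\<forall>i. w i < m"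
  shows "rabin_accepting A' (padded_run w \<omega>) \<longleftrightarrow> rabin_accepting A (block_run w \<omega>)"
proof (rule rabin_accepting_cong[OF pairs_simple_code])
  fix \<alpha> \<beta> q assume "(\<alpha>, \<beta>) \<in> set (pairs A)" "q \<in> \<alpha> \<union> \<beta>"
  then have q: "q < B" by (rule rabin_state_less_base)
  show "(\<exists>\<^sub>\<infinity>t. padded_run w \<omega> t = q) \<longleftrightarrow> (\<exists>\<^sub>\<infinity>i. block_run w \<omega> i = q)"
  proof (rule infm_iff_blocks)
    fix t
    define i j where "i = t div K" and "j = t mod K"
    have t: "t = i * K + j" "j < K" using K_gt0 by (simp_all add: i_def j_def)
    have "B \<le> padded_run w \<omega> t" if "j \<noteq> 0"
    proof -
      have "2 ^ j + bits_val j (\<omega> i) < P"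
        using tree_node_bounds[of j "\<omega> i"] pow_le_P[of "Suc j"] t by simp
      then show ?thesis
        using padded_run_block[OF w t(2)] node_bounds[OF block_run_less[OF w] w[rule_format]] that
        by (simp add: t(1) tree_pos_def tree_node_eq_1_iff)
    qed
    moreover have "padded_run w \<omega> t = block_run w \<omega> i" if "j = 0"
      using padded_run_block[OF w t(2), of \<omega> i] that by (simp add: t(1) tree_pos_def)
    ultimately show "padded_run w \<omega> t = q \<longleftrightarrow> (t mod K = 0 \<and> block_run w \<omega> (t div K) = q)"
      using q by (cases "j = 0") (auto simp flip: i_def j_def)
  qed
qed

definition well_padded :: "(nat \<Rightarrow> nat) \<Rightarrow> bool" where
  "well_padded w' \<longleftrightarrow> (\<forall>t. t mod K = 0 \<longleftrightarrow> w' t < m)"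

text \<open>The states the simple automaton can be in at position \<open>j\<close> of a block, whatever it reads.\<close>

definition block_shape :: "nat \<Rightarrow> nat \<Rightarrow> bool" where
  "block_shape j s \<longleftrightarrow> s = S \<or> (j = 0 \<and> s < n) \<or>
     (j \<noteq> 0 \<and> (\<exists>q a p. q < n \<and> a < m \<and> 2 ^ j \<le> p \<and> p < 2 ^ Suc j \<and> s = node q a p))"

lemma tree_step_block_shape:
  assumes "q < n" "a < m" "Suc j \<le> K" "2 ^ Suc j \<le> p" "p < 2 ^ Suc (Suc j)"
  shows "block_shape (Suc j mod K) (tree_step y q a p)"
proof (cases "Suc j = K")
  case True
  then have "P \<le> p" "p - P < 2 ^ K" using assms(4,5) by (simp_all add: P_eq)
  then show ?thesis
    using target_less[OF assms(1,2)] True by (simp add: block_shape_def tree_step_eq)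
next
  case False
  then have "p < P" using assms(3,5) pow_le_P[of "Suc (Suc j)"] by simp
  then show ?thesis
    using False assms by (auto simp: block_shape_def tree_step_eq)
qed

lemma next_state_block_shape:
  assumes "j < K" "block_shape j s" "c \<le> m" "b \<le> 1"
  shows "block_shape (Suc j mod K) (next_state y s c b)"
  using assms(2) unfolding block_shape_def [of j]
proof (elim disjE conjE exE)
  assume "s = S"
  then show ?thesis by (simp add: block_shape_def next_state_sink)
next
  assume "j = 0" "s < n"
  then show ?thesis
    using tree_step_block_shape[of s c 0 "2 + b"] assms next_state_orig_letter[of s c b]
      next_state_orig_padding[of s c b]
    by (cases "c < m") (auto simp: block_shape_def)
next
  fix q a p assume "j \<noteq> 0" "q < n" "a < m" "2 ^ j \<le> p" "p < 2 ^ Suc j" "s = node q a p"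
  moreover have "2 \<le> p" "p < P"
    using \<open>j \<noteq> 0\<close> \<open>2 ^ j \<le> p\<close> \<open>p < 2 ^ Suc j\<close> assms(1) pow_le_P[of "Suc j"]
      power_increasing[of 1 j "2::nat"] by auto
  ultimately show ?thesis
    using tree_step_block_shape[of q a j "2 * p + b"] assms next_state_node_padding[of q a p b]
      next_state_node_letter[of q a p c b]
    by (cases "c = m") (auto simp: block_shape_def)
qed

lemma run_block_shape:
  assumes "\<forall>t. w' t \<le> m"
  shows "block_shape (t mod K) (sampled_run A' coin_step w' \<omega> t)"
proof (induction t)
  case 0 then show ?case using init_less
    by (simp add: block_shape_def aut_of_def simple_code_def Let_def)
next
  case (Suc t)
  have "Suc (t mod K) mod K = Suc t mod K" by (simp add: mod_Suc_eq)
  then show ?case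
    using next_state_block_shape[OF _ Suc, of "w' t" "of_bool (\<omega> t)"] assms K_gt0
    by (simp add: coin_step_def)
qed

lemma next_state_misplaced:
  assumes "block_shape j s" "c \<le> m" "\<not> (j = 0 \<longleftrightarrow> c < m)" "j < K"
  shows "next_state y s c b = S"
  using assms pow_le_P[of "Suc j"]
  by (auto simp: block_shape_def next_state_sink next_state_orig_padding next_state_node_letter)

lemma ill_padded_not_accepting:
  assumes w': "\<forall>t. w' t \<le> m" and bad: "\<not> well_padded w'"
  shows "\<not> rabin_accepting A' (sampled_run A' coin_step w' \<omega>)"
proof -
  let ?r = "sampled_run A' coin_step w' \<omega>"
  have "\<exists>t0. \<not> (t0 mod K = 0 \<longleftrightarrow> w' t0 < m)" using bad unfolding well_padded_def by simp
  then obtain t0 where t0: "\<not> (t0 mod K = 0 \<longleftrightarrow> w' t0 < m)" ..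
  have "?r (Suc t0 + k) = S" for k
  proof (induction k)
    case 0
    have "?r (Suc t0) = next_state y (?r t0) (w' t0) (of_bool (\<omega> t0))"
      unfolding sampled_run_simps coin_step_def[of "?r t0"] ..
    then show ?case
      using next_state_misplaced[OF run_block_shape[OF w'] _ t0] w' K_gt0 by simp
  next
    case (Suc k)
    have "?r (Suc t0 + Suc k) = next_state y (?r (Suc t0 + k)) (w' (Suc t0 + k))
      (of_bool (\<omega> (Suc t0 + k)))"
      unfolding add_Suc_right sampled_run_simps coin_step_def[of "?r (Suc t0 + k)"] ..
    then show ?case using Suc by (simp add: next_state_sink)
  qed
  then have "\<forall>t\<ge>Suc t0. ?r t = S" by (metis le_Suc_ex)
  moreover have "S \<notin> \<alpha>" if "(\<alpha>, \<beta>) \<in> set (pairs A')" for \<alpha> \<beta>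
    using rabin_state_less_base[of \<alpha> \<beta> S] that by (auto simp: S_eq)
  ultimately show ?thesis by (rule not_rabin_accepting_eventually_const)
qed

lemma words_aut_of: "words A = {w. \<forall>i. w i < m}" by (simp add: words_def aut_of_def)
lemma words_simple: "words A' = {w. \<forall>t. w t \<le> m}"
  by (auto simp: words_def less_Suc_eq_le)

lemma run_sampler_coin:
  assumes "w' \<in> words A'"
  shows "run_sampler A' w' coin coin_step"
proof -
  have G_states: "coin_step q a c \<in> states A'" if "q \<in> states A'" "a \<in> alphabet A'" "c \<in> space coin"
    for q a c
  proof -
    have "q \<le> S" using that by simp
    then have "next_state y q a b \<le> S" if "b \<le> 1" for b using next_state_le_sink that by blast
    then show ?thesis by (cases c) (simp_all add: coin_step_def less_Suc_eq_le)
  qed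
  have G_measurable: "coin_step q a \<in> measurable coin (count_space UNIV)" for q a by (rule measurable_coin)
  have G_trans: "trans A' q a p = measure coin {c \<in> space coin. coin_step q a c = p}"
    if q: "q \<in> states A'" and a: "a \<in> alphabet A'" and p: "p \<in> states A'" for q a p
  proof -
    have qa: "q < out_nstates y" "a < out_nletters y" using q a
      by (simp_all add: out_nstates_eq out_nletters_eq)
    show ?thesis unfolding trans_simple_code[OF qa] measure_coin coin_step_def
      by (simp add: card_Collect_bool)
  qed
  show ?thesis by (rule run_sampler.intro[OF wf_simple_code assms prob_space_coin G_states G_measurable G_trans])
qed

lemma run_sampler_block:
  assumes "w \<in> words A"
  shows "run_sampler A w (coin_block K) block_step"
proof -
  have G_states: "block_step q a c \<in> states A" if "q \<in> states A" "a \<in> alphabet A"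
    "c \<in> space (coin_block K)" for q a c
    using that target_less[of q a "bits_val K c"] bits_val_less[of K c]
    by (simp add: block_step_def aut_of_def)
  have G_measurable: "block_step q a \<in> measurable (coin_block K) (count_space UNIV)" for q a
    by (rule measurable_coin_block)
  have G_trans: "trans A q a p = measure (coin_block K) {c \<in> space (coin_block K). block_step q a c = p}"
    if q: "q \<in> states A" and a: "a \<in> alphabet A" and p: "p \<in> states A" for q a p
  proof -
    have qap: "q < n" "a < m" "p < n" using q a p by (simp_all add: aut_of_def)
    have "measure (coin_block K) {c \<in> space (coin_block K). block_step q a c = p} =
        card {v. v < 2 ^ K \<and> target y q a v = p} / 2 ^ K"
      unfolding block_step_def by (rule measure_coin_block_bits_val)
    also have "\<dots> = trans A q a p" using card_target_eq[OF qap] by simp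
    finally show ?thesis by simp
  qed
  show ?thesis by (rule run_sampler.intro[OF wf assms prob_space_coin_block G_states G_measurable G_trans])
qed

lemma pad_in_words: "w \<in> words A \<Longrightarrow> pad w \<in> words A'"
  by (auto simp: words_aut_of words_simple pad_def less_imp_le)

lemma acc_prob_pad:
  assumes w: "w \<in> words A"
  shows "acc_prob A' (pad w) = acc_prob A w"
proof -
  interpret padded: run_sampler A' "pad w" coin coin_step
    by (rule run_sampler_coin[OF pad_in_words[OF w]])
  interpret original: run_sampler A w "coin_block K" block_step by (rule run_sampler_block[OF w])
  have wl: "\<forall>i. w i < m" using w by (simp add: words_aut_of)
  let ?S = "{\<omega>' \<in> space coin_seqs. rabin_accepting A' (sampled_run A' coin_step (pad w) \<omega>')}"
  have "acc_prob A' (pad w) = measure coin_seqs ?S" by (rule padded.acc_prob_eq_sampled)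
  also have "\<dots> = measure (distr (block_seqs K) coin_seqs (unblock K)) ?S"
    by (simp add: distr_unblock[OF K_gt0])
  also have "\<dots> = measure (block_seqs K) (unblock K -` ?S \<inter> space (block_seqs K))"
    by (rule measure_distr[OF measurable_unblock[OF K_gt0] padded.accepting_event_in_sets])
  also have "unblock K -` ?S \<inter> space (block_seqs K) =
      {\<omega> \<in> space (block_seqs K). rabin_accepting A (block_run w \<omega>)}"
    using accepting_padded_iff[OF wl] by (auto simp: space_coin_seqs)
  also have "measure (block_seqs K) \<dots> = acc_prob A w" by (rule original.acc_prob_eq_sampled[symmetric])
  finally show ?thesis .
qed

lemma acc_prob_ill_padded:
  assumes w': "w' \<in> words A'" and bad: "\<not> well_padded w'"
  shows "acc_prob A' w' = 0"
proof -
  interpret sampler: run_sampler A' w' coin coin_step by (rule run_sampler_coin[OF w'])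
  have wl: "\<forall>t. w' t \<le> m" using w' by (simp add: words_simple)
  have e: "{\<omega>' \<in> space coin_seqs. rabin_accepting A' (sampled_run A' coin_step w' \<omega>')} = {}"
    using ill_padded_not_accepting[OF wl bad] by auto
  show ?thesis by (simp only: sampler.acc_prob_eq_sampled e measure_empty)
qed

lemma well_padded_unpad:
  assumes w': "w' \<in> words A'" and g: "well_padded w'"
  shows "(\<lambda>i. w' (i * K)) \<in> words A" "pad (\<lambda>i. w' (i * K)) = w'"
proof -
  have "w' (i * K) < m" for i
  proof -
    have "(i * K) mod K = 0" by simp
    then show ?thesis using g[unfolded well_padded_def, rule_format, of "i * K"] by simp
  qed
  then show "(\<lambda>i. w' (i * K)) \<in> words A" by (simp add: words_aut_of)
  have "pad (\<lambda>i. w' (i * K)) t = w' t" for t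
  proof (cases "t mod K = 0")
    case True
    then have "t div K * K = t" by (metis div_mult_mod_eq add_0_right)
    then show ?thesis using True by (simp add: pad_def)
  next
    case False
    then have "\<not> w' t < m" using g[unfolded well_padded_def, rule_format, of t] by simp
    moreover have "w' t \<le> m" using w' by (simp add: words_simple)
    ultimately show ?thesis using False by (simp add: pad_def)
  qed
  then show "pad (\<lambda>i. w' (i * K)) = w'" by auto
qed

lemma ex_acc_prob_iff:
  assumes Q0: "\<not> Q 0"
  shows "(\<exists>w\<in>words A. Q (acc_prob A w)) \<longleftrightarrow> (\<exists>w'\<in>words A'. Q (acc_prob A' w'))"
proof
  assume "\<exists>w\<in>words A. Q (acc_prob A w)"
  then obtain w where "w \<in> words A" "Q (acc_prob A w)" by blast
  then show "\<exists>w'\<in>words A'. Q (acc_prob A' w')" using pad_in_words acc_prob_pad by metis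
next
  assume "\<exists>w'\<in>words A'. Q (acc_prob A' w')"
  then obtain w' where w': "w' \<in> words A'" "Q (acc_prob A' w')" by blast
  then have g: "well_padded w'" using acc_prob_ill_padded Q0 by metis
  show "\<exists>w\<in>words A. Q (acc_prob A w)"
    using well_padded_unpad[OF w'(1) g] acc_prob_pad w'(2) by metis
qed

lemma lang_pos_iff: "lang_pos A = {} \<longleftrightarrow> lang_pos A' = {}"
  using ex_acc_prob_iff[of "\<lambda>x. x > 0"] by (auto simp: lang_pos_def)

lemma lang_one_iff: "lang_one A = {} \<longleftrightarrow> lang_one A' = {}"
  using ex_acc_prob_iff[of "\<lambda>x. x = 1"] by (auto simp: lang_one_def)

lemma simple_code_correct:
  "rec_eval (compile 1 OutCodeE) [encode_code D] (encode_code (simple_code D)) \<and>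
    wf_pra A' \<and> simple_pra A' \<and> (lang_one A = {} \<longleftrightarrow> lang_one A' = {}) \<and>
    (lang_pos A = {} \<longleftrightarrow> lang_pos A' = {})"
  using rec_eval_simple_code wf_simple_code simple_pra_simple_code lang_one_iff lang_pos_iff
  by blast

end

theorem lemma3p5:
  shows "\<exists>c :: recf. \<forall>D :: pra_code.
     wf_pra (aut_of D) \<and> semi_simple_pra (aut_of D) \<longrightarrow>
     (\<exists>D' :: pra_code. rec_eval c [encode_code D] (encode_code D') \<and>
        wf_pra (aut_of D') \<and> simple_pra (aut_of D') \<and>
        (lang_one (aut_of D) = {} \<longleftrightarrow> lang_one (aut_of D') = {}) \<and>
        (lang_pos (aut_of D) = {} \<longleftrightarrow> lang_pos (aut_of D') = {}))"
proof (intro exI[of _ "compile 1 OutCodeE"] allI impI)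
  fix D :: pra_code
  \<comment> \<open>Every coded automaton is semi-simple, so only well-formedness is used.\<close>
  assume "wf_pra (aut_of D) \<and> semi_simple_pra (aut_of D)"
  then have "wf_code D" by (simp add: wf_code_def)
  then show "\<exists>D'. rec_eval (compile 1 OutCodeE) [encode_code D] (encode_code D') \<and>
      wf_pra (aut_of D') \<and> simple_pra (aut_of D') \<and>
      (lang_one (aut_of D) = {} \<longleftrightarrow> lang_one (aut_of D') = {}) \<and>
      (lang_pos (aut_of D) = {} \<longleftrightarrow> lang_pos (aut_of D') = {})"
    by (intro exI[of _ "simple_code D"]) (rule wf_code.simple_code_correct)
qed

end
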